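(* Let $k,\ell\in\mathbb Z_{\ge1}$. The following identities of differential operators on $C^\infty(\mathbb R^3)$ hold (products denote composition): (1) if $k<\ell$: $\mathcal D_+^{(k,\ell)}=\mathcal D_2^{\ell}\mathcal D_1^{k}$, $\mathcal D_-^{(\ell-k,\ell)}=\mathcal D_1^{\ell-k}\mathcal D_2^{\ell}$, and $\mathcal D_c^{(2k-\ell;\ell)}=\mathcal D_1^{\ell-k}\mathcal D_+^{(k,\ell)}=\mathcal D_-^{(\ell-k,\ell)}\mathcal D_1^{k}=\mathcal D_1^{\ell-k}\mathcal D_2^{\ell}\mathcal D_1^{k}$; (2) if $k>\ell$: $\mathcal D_1^{k-\ell}\mathcal D_c^{(2k-\ell;\ell)}=\mathcal D_+^{(k,\ell)}=\mathcal D_2^{\ell}\mathcal D_1^{k}$; (3) if $k>\ell$: $\mathcal D_+^{(k,k-\ell)}=\mathcal D_2^{k-\ell}\mathcal D_1^{k}$, $\mathcal D_-^{(k,\ell)}=\mathcal D_1^{k}\mathcal D_2^{\ell}$, and $\mathcal D_c^{(k-2\ell;k)}=\mathcal D_+^{(k,k-\ell)}\mathcal D_2^{\ell}=\mathcal D_2^{k-\ell}\mathcal D_-^{(k,\ell)}=\mathcal D_2^{k-\ell}\mathcal D_1^{k}\mathcal D_2^{\ell}$; (4) if $k<\ell$: $\mathcal D_2^{\ell-k}\mathcal D_c^{(k-2\ell;k)}=\mathcal D_-^{(k,\ell)}=\mathcal D_1^{k}\mathcal D_2^{\ell}$; (5) $\mathcal D_c^{(k;k)}=\mathcal D_+^{(k,k)}=\mathcal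 D_2^{k}\mathcal D_1^{k}$; (6) $\mathcal D_c^{(-k;k)}=\mathcal D_-^{(k,k)}=\mathcal D_1^{k}\mathcal D_2^{k}$. (In each case these are factorizations of the $SL(3,\mathbb R)$-intertwining differential operators between principal series representations realized on the open Bruhat cell via $(x_1,x_2,x_3)\mapsto\exp(x_1E_{2,1}+x_2E_{3,2}+x_3E_{3,1})$.)
   Context: On $\mathbb R^3$ with coordinates $(x_1,x_2,x_3)$: $\mathcal D_1=\partial_{x_1}+\frac{x_2}2\partial_{x_3}$, $\mathcal D_2=\partial_{x_2}-\frac{x_1}2\partial_{x_3}$, $\mathcal D_3=\partial_{x_3}$ (these are the infinitesimal right translations by $E_{2,1},E_{3,2},E_{3,1}$ in exponential coordinates of the lower unitriangular group). Symmetrization $\mathbf s(\mathcal D_1^p\mathcal D_2^q\mathcal D_3^r)$ = average over all orderings of the product containing $\mathcal D_1$ $p$ times, $\mathcal D_2$ $q$ times, $\mathcal D_3$ $r$ times. Cayley continuants: $\mathrm{Cay}_m(x;y)=\sum_{j=0}^m\binom mj(\frac{x+y}2)^{\underline j}(\frac{x-y}2)^{\overline{m-j}}$, with $r^{\underline j}=r(r-1)\cdots(r-j+1)$ and $r^{\overline j}=r(r+1)\cdots(r+j-1)$ (equivalently the $m\times m$ tridiagonal determinant with diagonal $x$, superdiagonal $1,\dots,m-1$, subdiagonal $y,\dots,y-m+2$). For $a,b\in\mathbb Z_{\ge0}$, $s\in\mathbb C$: $\mathcal D_\pm^{(a,b)}=\sum_{m=0}^{\min(a,b)}\frac{(\pm1)^m}{2^m}m!\binom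 am\binom bm\mathbf s(\mathcal D_1^{a-m}\mathcal D_2^{b-m}\mathcal D_3^m)$ and $\mathcal D_c^{(s;a)}=\sum_{m=0}^a\frac1{2^m}\binom am\mathrm{Cay}_m(s;a)\mathbf s(\mathcal D_1^{a-m}\mathcal D_2^{a-m}\mathcal D_3^m)$. *)

theory Defs
  imports "HOL-Analysis.Analysis"
begin

type_synonym R3 = "real \<times> real \<times> real"

definition pd :: "nat \<Rightarrow> (R3 \<Rightarrow> complex) \<Rightarrow> (R3 \<Rightarrow> complex)" where
  "pd i f = (\<lambda>(x1,x2,x3).
     if i = 0 then vector_derivative (\<lambda>t. f (t,x2,x3)) (at x1)
     else if i = 1 then vector_derivative (\<lambda>t. f (x1,t,x3)) (at x2)
     else vector_derivative (\<lambda>t. f (x1,x2,t)) (at x3))"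

definition smooth3 :: "(R3 \<Rightarrow> complex) \<Rightarrow> bool" where
  "smooth3 f \<longleftrightarrow> (\<forall>is. set is \<subseteq> {0,1,2} \<longrightarrow> (\<forall>x. foldr pd is f differentiable (at x)))"

definition D1 :: "(R3 \<Rightarrow> complex) \<Rightarrow> (R3 \<Rightarrow> complex)" where
  "D1 f = (\<lambda>(x1,x2,x3). pd 0 f (x1,x2,x3) + of_real (x2/2) * pd 2 f (x1,x2,x3))"

definition D2 :: "(R3 \<Rightarrow> complex) \<Rightarrow> (R3 \<Rightarrow> complex)" where
  "D2 f = (\<lambda>(x1,x2,x3). pd 1 f (x1,x2,x3) - of_real (x1/2) * pd 2 f (x1,x2,x3))"

definition D3 :: "(R3 \<Rightarrow> complex) \<Rightarrow> (R3 \<Rightarrow> complex)" where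
  "D3 f = pd 2 f"

definition Dv :: "nat \<Rightarrow> (R3 \<Rightarrow> complex) \<Rightarrow> (R3 \<Rightarrow> complex)" where
  "Dv i = (if i = 0 then D1 else if i = 1 then D2 else D3)"

definition word_op :: "nat list \<Rightarrow> (R3 \<Rightarrow> complex) \<Rightarrow> (R3 \<Rightarrow> complex)" where
  "word_op w f = foldr Dv w f"

definition words :: "nat \<Rightarrow> nat \<Rightarrow> nat \<Rightarrow> nat list set" where
  "words p q r = {w. length w = p + q + r \<and> set w \<subseteq> {0,1,2} \<and>
      count_list w 0 = p \<and> count_list w 1 = q \<and> count_list w 2 = r}"

text \<open>Symmetrization s(D1^p D2^q D3^r): average over all orderings (equivalently over all
  distinct words, each occurring p!q!r! times among the orderings).\<close>
definition symm :: "nat \<Rightarrow> nat \<Rightarrow> nat \<Rightarrow> (R3 \<Rightarrow> complex) \<Rightarrow> (R3 \<Rightarrow> complex)" where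
  "symm p q r f = (\<lambda>x. (\<Sum>w\<in>words p q r. word_op w f x) / of_nat (card (words p q r)))"

definition falling :: "complex \<Rightarrow> nat \<Rightarrow> complex" where
  "falling z j = (\<Prod>i<j. z - of_nat i)"

definition rising :: "complex \<Rightarrow> nat \<Rightarrow> complex" where
  "rising z j = (\<Prod>i<j. z + of_nat i)"

definition Cay :: "nat \<Rightarrow> complex \<Rightarrow> complex \<Rightarrow> complex" where
  "Cay m x y = (\<Sum>j\<le>m. of_nat (m choose j) * falling ((x + y) / 2) j * rising ((x - y) / 2) (m - j))"

definition Dpm :: "complex \<Rightarrow> nat \<Rightarrow> nat \<Rightarrow> (R3 \<Rightarrow> complex) \<Rightarrow> (R3 \<Rightarrow> complex)" where
  "Dpm sg a b f = (\<lambda>x. \<Sum>m\<le>min a b. sg ^ m / 2 ^ m * of_nat (fact m * (a choose m) * (b choose m))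
        * symm (a - m) (b - m) m f x)"

abbreviation Dplus where "Dplus \<equiv> Dpm 1"
abbreviation Dminus where "Dminus \<equiv> Dpm (-1)"

definition Dc :: "complex \<Rightarrow> nat \<Rightarrow> (R3 \<Rightarrow> complex) \<Rightarrow> (R3 \<Rightarrow> complex)" where
  "Dc s a f = (\<lambda>x. \<Sum>m\<le>a. 1 / 2 ^ m * of_nat (a choose m) * Cay m s (of_nat a)
        * symm (a - m) (a - m) m f x)"

end

theory Submission
  imports Defs "HOL-Combinatorics.Multiset_Permutations" "HOL-Computational_Algebra.Formal_Power_Series"
begin

text \<open>
  By symmetry of mixed partial derivatives, on smooth functions the operators satisfy the
  Heisenberg relations \<open>D2 D1 = D1 D2 + D3\<close>, with \<open>D3\<close> commuting with \<open>D1\<close> and \<open>D2\<close>.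
  Hence every word in \<open>D1, D2, D3\<close> can be brought into the normal order
  \<open>D1^a D2^b D3^c\<close>, and averaging over words gives
  \<open>s(D1^p D2^q D3^r) = \<Sum>\<^sub>c c! C(p,c) C(q,c) 2^-c D1^(p-c) D2^(q-c) D3^(r+c)\<close>.
  Substituting this, \<open>D\<^sub>\<plusminus>^(a,b) = \<Sum>\<^sub>j j! C(a,j) C(b,j) ((1 \<plusminus> 1)/2)^j D1^(a-j) D2^(b-j) D3^j\<close>,
  which is the normal form of \<open>D2^b D1^a\<close> for the sign \<open>+\<close> and is \<open>D1^a D2^b\<close> for the sign \<open>-\<close>.
  Writing the Cayley continuants through generalized binomial coefficients, two applications of
  the Chu--Vandermonde identity give
  \<open>D\<^sub>c^(2z-a;a) = \<Sum>\<^sub>j j! C(a,j) (z gchoose j) D1^(a-j) D2^(a-j) D3^j\<close>.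
  All identities of the theorem then follow by comparing coefficients of normal-ordered monomials:
  for a natural number \<open>z\<close> the coefficient \<open>z gchoose j\<close> cuts the sum off at \<open>j = z\<close>, and for
  negative \<open>z\<close> Chu--Vandermonde absorbs the extra power of \<open>D2\<close>.
\<close>

section \<open>Partial derivatives and symmetry of mixed partials\<close>

definition coord :: "nat \<Rightarrow> R3" where
  "coord i = (if i = 0 then (1,0,0) else if i = 1 then (0,1,0) else (0,0,1))"

lemma norm_coord [simp]: "norm (coord i) = 1"
  by (simp add: coord_def norm_Pair)

lemma has_vector_derivative_compose_at:
  assumes "(\<gamma> has_vector_derivative v) (at s within S)" and "(h has_derivative H) (at (\<gamma> s))"
  shows "((\<lambda>t. h (\<gamma> t)) has_vector_derivative H v) (at s within S)"
  using vector_derivative_diff_chain_within[OF assms(1) has_derivative_at_withinI[OF assms(2)]]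
  by (simp add: o_def)

lemma pd_has_derivative:
  assumes "(h has_derivative H) (at p)"
  shows "pd i h p = H (coord i)"
proof -
  obtain x1 x2 x3 where p: "p = (x1,x2,x3)" by (cases p)
  have chain: "((\<lambda>t. h (\<gamma> t)) has_vector_derivative H v) (at s)"
    if "(\<gamma> has_vector_derivative v) (at s)" and "\<gamma> s = p" for \<gamma> v s
    using has_vector_derivative_compose_at[OF that(1)] assms that(2) by simp
  have "((\<lambda>t. h (t,x2,x3)) has_vector_derivative H (1,0,0)) (at x1)"
    "((\<lambda>t. h (x1,t,x3)) has_vector_derivative H (0,1,0)) (at x2)"
    "((\<lambda>t. h (x1,x2,t)) has_vector_derivative H (0,0,1)) (at x3)"
    by (rule chain; auto intro!: derivative_eq_intros simp: p zero_prod_def)+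
  then show ?thesis
    by (auto simp: pd_def coord_def p vector_derivative_at)
qed

lemma has_vector_derivative_along_coord:
  assumes "\<forall>y. g differentiable (at y)"
  shows "((\<lambda>s. g (q + s *\<^sub>R coord i)) has_vector_derivative pd i g (q + s *\<^sub>R coord i)) (at s within S)"
proof -
  obtain G where G: "(g has_derivative G) (at (q + s *\<^sub>R coord i))"
    using assms differentiable_def by blast
  have "((\<lambda>s. q + s *\<^sub>R coord i) has_vector_derivative coord i) (at s within S)"
    by (auto intro!: derivative_eq_intros)
  from has_vector_derivative_compose_at[OF this G] show ?thesis
    by (simp add: pd_has_derivative[OF G])
qed

lemma pd_increment_approx:
  assumes U: "(pd i g has_derivative U) (at p)" and "\<epsilon> > 0"
  obtains \<delta> where "\<delta> > 0" and "\<And>h s. \<bar>h\<bar> < \<delta> \<Longrightarrow> \<bar>s\<bar> \<le> \<bar>h\<bar> \<Longrightarrow>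
    norm (pd i g (p + h *\<^sub>R coord j + s *\<^sub>R coord i) - pd i g (p + s *\<^sub>R coord i)
          - of_real h * U (coord j)) \<le> 3 * \<epsilon> * \<bar>h\<bar>"
proof -
  define u where "u = pd i g"
  define r where "r y = u y - u p - U (y - p)" for y
  obtain d where "d > 0" and d: "\<And>y. norm (y - p) < d \<Longrightarrow> norm (r y) \<le> \<epsilon> * norm (y - p)"
    using assms unfolding has_derivative_at_alt u_def r_def by blast
  have lin: "linear U" using U has_derivative_linear by blast
  show thesis
  proof (rule that[of "d/2"])
    show "d/2 > 0" using \<open>d > 0\<close> by simp
    fix h s :: real assume h: "\<bar>h\<bar> < d/2" and s: "\<bar>s\<bar> \<le> \<bar>h\<bar>"
    let ?y1 = "p + h *\<^sub>R coord j + s *\<^sub>R coord i" and ?y2 = "p + s *\<^sub>R coord i"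
    have "norm (?y1 - p) \<le> \<bar>h\<bar> + \<bar>s\<bar>"
      using norm_triangle_ineq[of "h *\<^sub>R coord j" "s *\<^sub>R coord i"] by (simp add: add.assoc)
    then have n1: "norm (?y1 - p) \<le> 2 * \<bar>h\<bar>" using s by linarith
    have n2: "norm (?y2 - p) \<le> \<bar>h\<bar>" using s by simp
    have "norm (r ?y1) \<le> \<epsilon> * norm (?y1 - p)" using n1 h by (intro d) linarith
    also have "\<dots> \<le> \<epsilon> * (2 * \<bar>h\<bar>)" using n1 \<open>\<epsilon> > 0\<close> by (intro mult_left_mono) auto
    finally have "norm (r ?y1) \<le> \<epsilon> * (2 * \<bar>h\<bar>)" .
    moreover have "norm (r ?y2) \<le> \<epsilon> * norm (?y2 - p)" using n2 h by (intro d) linarith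
    then have "norm (r ?y2) \<le> \<epsilon> * \<bar>h\<bar>"
      using n2 \<open>\<epsilon> > 0\<close> by (meson mult_left_mono less_imp_le order_trans)
    moreover have "u ?y1 - u ?y2 - of_real h * U (coord j) = r ?y1 - r ?y2"
      by (simp add: r_def linear_add[OF lin] linear_scale[OF lin] scaleR_conv_of_real algebra_simps)
    ultimately show "norm (pd i g ?y1 - pd i g ?y2 - of_real h * U (coord j)) \<le> 3 * \<epsilon> * \<bar>h\<bar>"
      using norm_triangle_ineq4[of "r ?y1" "r ?y2"] by (simp add: u_def)
  qed
qed

text \<open>The second difference of \<open>g\<close> with step \<open>h\<close> in the directions \<open>i\<close>, \<open>j\<close> is symmetric in
  \<open>i\<close>, \<open>j\<close>; comparing this approximation with its mirror image gives Schwarz's theorem.\<close>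

lemma second_difference_approx:
  fixes g :: "R3 \<Rightarrow> complex"
  assumes g: "\<forall>y. g differentiable (at y)" and U: "(pd i g has_derivative U) (at p)" and "\<epsilon> > 0"
  obtains \<delta> where "\<delta> > 0" and "\<And>h. \<bar>h\<bar> < \<delta> \<Longrightarrow>
    norm (g (p + h *\<^sub>R coord j + h *\<^sub>R coord i) - g (p + h *\<^sub>R coord i) - g (p + h *\<^sub>R coord j) + g p
          - of_real (h * h) * U (coord j)) \<le> 9 * \<epsilon> * (h * h)"
proof -
  obtain \<delta> where "\<delta> > 0" and \<delta>: "\<And>h s. \<bar>h\<bar> < \<delta> \<Longrightarrow> \<bar>s\<bar> \<le> \<bar>h\<bar> \<Longrightarrow>
    norm (pd i g (p + h *\<^sub>R coord j + s *\<^sub>R coord i) - pd i g (p + s *\<^sub>R coord i)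
          - of_real h * U (coord j)) \<le> 3 * \<epsilon> * \<bar>h\<bar>"
    using pd_increment_approx[OF U \<open>\<epsilon> > 0\<close>] by blast
  show thesis
  proof (rule that[OF \<open>\<delta> > 0\<close>])
    fix h :: real assume h: "\<bar>h\<bar> < \<delta>"
    define \<phi> where "\<phi> s = g (p + h *\<^sub>R coord j + s *\<^sub>R coord i) - g (p + s *\<^sub>R coord i)" for s
    define \<phi>' where "\<phi>' s = pd i g (p + h *\<^sub>R coord j + s *\<^sub>R coord i) - pd i g (p + s *\<^sub>R coord i)" for s
    have \<phi>': "norm (\<phi>' s - of_real h * U (coord j)) \<le> 3 * \<epsilon> * \<bar>h\<bar>" if "\<bar>s\<bar> \<le> \<bar>h\<bar>" for s
      using \<delta>[OF h that] by (simp add: \<phi>'_def)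
    have "norm (\<phi> h - \<phi> 0 - (h - 0) *\<^sub>R \<phi>' 0) \<le> norm (h - 0) * (6 * \<epsilon> * \<bar>h\<bar>)"
    proof (rule vector_differentiable_bound_linearization[where S="closed_segment 0 h"])
      show "(\<phi> has_vector_derivative \<phi>' s) (at s within closed_segment 0 h)" for s
        unfolding \<phi>_def \<phi>'_def
        by (intro has_vector_derivative_diff has_vector_derivative_along_coord[OF g,
              where q="p + h *\<^sub>R coord j", simplified add.assoc] has_vector_derivative_along_coord[OF g])
      show "norm (\<phi>' s - \<phi>' 0) \<le> 6 * \<epsilon> * \<bar>h\<bar>" if "s \<in> closed_segment 0 h" for s
      proof -
        have "\<bar>s\<bar> \<le> \<bar>h\<bar>" using that by (auto simp: closed_segment_eq_real_ivl split: if_splits)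
        then show ?thesis
          using \<phi>'[of s] \<phi>'[of 0] norm_triangle_ineq4[of "\<phi>' s - of_real h * U (coord j)" "\<phi>' 0 - of_real h * U (coord j)"]
          by simp
      qed
    qed auto
    then have A: "norm (\<phi> h - \<phi> 0 - of_real h * \<phi>' 0) \<le> 6 * \<epsilon> * (h * h)"
      by (simp add: scaleR_conv_of_real algebra_simps)
    have "norm (of_real h * (\<phi>' 0 - of_real h * U (coord j))) \<le> \<bar>h\<bar> * (3 * \<epsilon> * \<bar>h\<bar>)"
      unfolding norm_mult norm_of_real using \<phi>'[of 0] by (intro mult_left_mono) auto
    then have B: "norm (of_real h * \<phi>' 0 - of_real (h * h) * U (coord j)) \<le> 3 * \<epsilon> * (h * h)"
      by (simp add: algebra_simps)
    show "norm (g (p + h *\<^sub>R coord j + h *\<^sub>R coord i) - g (p + h *\<^sub>R coord i) - g (p + h *\<^sub>R coord j) + g p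
          - of_real (h * h) * U (coord j)) \<le> 9 * \<epsilon> * (h * h)"
      using norm_triangle_le[OF add_mono[OF A B]] by (simp add: \<phi>_def algebra_simps)
  qed
qed

theorem pd_commute:
  fixes g :: "R3 \<Rightarrow> complex"
  assumes g: "\<forall>y. g differentiable (at y)"
    and "pd i g differentiable (at p)" and "pd j g differentiable (at p)"
  shows "pd j (pd i g) p = pd i (pd j g) p"
proof -
  obtain U where U: "(pd i g has_derivative U) (at p)" using assms(2) differentiable_def by blast
  obtain V where V: "(pd j g has_derivative V) (at p)" using assms(3) differentiable_def by blast
  define \<Delta> where "\<Delta> = norm (U (coord j) - V (coord i))"
  have bound: "\<Delta> \<le> 18 * \<epsilon>" if \<epsilon>: "\<epsilon> > 0" for \<epsilon>
  proof -
    obtain d1 where "d1 > 0" and d1: "\<And>h. \<bar>h\<bar> < d1 \<Longrightarrow>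
      norm (g (p + h *\<^sub>R coord j + h *\<^sub>R coord i) - g (p + h *\<^sub>R coord i) - g (p + h *\<^sub>R coord j) + g p
            - of_real (h * h) * U (coord j)) \<le> 9 * \<epsilon> * (h * h)"
      using second_difference_approx[OF g U \<epsilon>] by blast
    obtain d2 where "d2 > 0" and d2: "\<And>h. \<bar>h\<bar> < d2 \<Longrightarrow>
      norm (g (p + h *\<^sub>R coord i + h *\<^sub>R coord j) - g (p + h *\<^sub>R coord j) - g (p + h *\<^sub>R coord i) + g p
            - of_real (h * h) * V (coord i)) \<le> 9 * \<epsilon> * (h * h)"
      using second_difference_approx[OF g V \<epsilon>] by blast
    define h where "h = min d1 d2 / 2"
    have "h > 0" "\<bar>h\<bar> < d1" "\<bar>h\<bar> < d2" using \<open>d1 > 0\<close> \<open>d2 > 0\<close> by (auto simp: h_def)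
    define A where "A = g (p + h *\<^sub>R coord j + h *\<^sub>R coord i) - g (p + h *\<^sub>R coord i) - g (p + h *\<^sub>R coord j) + g p"
    have "norm (A - of_real (h * h) * U (coord j)) \<le> 9 * \<epsilon> * (h * h)"
      using d1[OF \<open>\<bar>h\<bar> < d1\<close>] by (simp add: A_def)
    moreover have "norm (A - of_real (h * h) * V (coord i)) \<le> 9 * \<epsilon> * (h * h)"
      using d2[OF \<open>\<bar>h\<bar> < d2\<close>] by (simp add: A_def algebra_simps)
    ultimately have "norm (of_real (h * h) * (U (coord j) - V (coord i))) \<le> (h * h) * (18 * \<epsilon>)"
      using norm_triangle_ineq4[of "A - of_real (h * h) * V (coord i)" "A - of_real (h * h) * U (coord j)"]
      by (simp add: algebra_simps norm_minus_commute)
    then show ?thesis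
      using \<open>h > 0\<close> by (simp add: \<Delta>_def norm_mult)
  qed
  have "\<Delta> = 0"
    using bound[of "\<Delta> / 36"] by (cases "\<Delta> > 0") (auto simp: \<Delta>_def)
  then show ?thesis using pd_has_derivative[OF U, of j] pd_has_derivative[OF V, of i] by (simp add: \<Delta>_def)
qed

section \<open>Smooth functions\<close>

text \<open>The coefficients of \<open>D1\<close> and \<open>D2\<close> are affine in \<open>(x1, x2)\<close>, and multiplication by such
  functions preserves smoothness because their partial derivatives are constants.\<close>

definition affine_coeff :: "complex \<Rightarrow> real \<Rightarrow> real \<Rightarrow> R3 \<Rightarrow> complex" where
  "affine_coeff \<alpha> b1 b2 x = \<alpha> + of_real (b1 * fst x + b2 * fst (snd x))"

definition affine_coeff_slope :: "real \<Rightarrow> real \<Rightarrow> nat \<Rightarrow> real" where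
  "affine_coeff_slope b1 b2 i = (if i = 0 then b1 else if i = 1 then b2 else 0)"

lemma affine_coeff_const [simp]: "affine_coeff \<alpha> 0 0 x = \<alpha>"
  by (simp add: affine_coeff_def)

lemma has_derivative_affine_coeff:
  "(affine_coeff \<alpha> b1 b2 has_derivative (\<lambda>y. of_real (b1 * fst y + b2 * fst (snd y)))) (at p)"
  unfolding affine_coeff_def by (auto intro!: derivative_eq_intros simp: algebra_simps)

lemma affine_coeff_differentiable: "affine_coeff \<alpha> b1 b2 differentiable (at p)"
  using has_derivative_affine_coeff differentiable_def by blast

lemma pd_add:
  assumes "u differentiable (at p)" and "v differentiable (at p)"
  shows "pd i (\<lambda>x. u x + v x) p = pd i u p + pd i v p"
proof -
  obtain U V where U: "(u has_derivative U) (at p)" and V: "(v has_derivative V) (at p)"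
    using assms differentiable_def by blast
  show ?thesis
    using pd_has_derivative[OF has_derivative_add[OF U V]] pd_has_derivative[OF U] pd_has_derivative[OF V]
    by simp
qed

lemma pd_affine_coeff_mult:
  assumes "g differentiable (at p)"
  shows "pd i (\<lambda>x. affine_coeff \<alpha> b1 b2 x * g x) p =
    affine_coeff \<alpha> b1 b2 p * pd i g p + of_real (affine_coeff_slope b1 b2 i) * g p"
proof -
  obtain G where G: "(g has_derivative G) (at p)" using assms differentiable_def by blast
  have "pd i (\<lambda>x. affine_coeff \<alpha> b1 b2 x * g x) p =
      affine_coeff \<alpha> b1 b2 p * G (coord i) + of_real (b1 * fst (coord i) + b2 * fst (snd (coord i))) * g p"
    by (rule pd_has_derivative[OF has_derivative_mult[OF has_derivative_affine_coeff G]])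
  moreover have "b1 * fst (coord i) + b2 * fst (snd (coord i)) = affine_coeff_slope b1 b2 i"
    by (simp add: coord_def affine_coeff_slope_def)
  ultimately show ?thesis
    by (simp add: pd_has_derivative[OF G])
qed

lemma pd_zero: "pd i (\<lambda>x. 0) p = 0"
  using pd_has_derivative[OF has_derivative_const] by simp

text \<open>\<open>smooth3\<close> quantifies over derivatives of every order at once; bounding the order
  makes closure properties provable by induction.\<close>

definition differentiable_upto :: "nat \<Rightarrow> (R3 \<Rightarrow> complex) \<Rightarrow> bool" where
  "differentiable_upto n g \<longleftrightarrow>
     (\<forall>is. length is \<le> n \<longrightarrow> set is \<subseteq> {0,1,2} \<longrightarrow> (\<forall>x. foldr pd is g differentiable (at x)))"

lemma smooth3_iff_differentiable_upto: "smooth3 g \<longleftrightarrow> (\<forall>n. differentiable_upto n g)"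
proof
  assume "\<forall>n. differentiable_upto n g"
  then have "differentiable_upto (length is) g" for "is" by blast
  then show "smooth3 g" unfolding smooth3_def differentiable_upto_def by blast
qed (simp add: smooth3_def differentiable_upto_def)

lemma differentiable_upto_0: "differentiable_upto 0 g \<longleftrightarrow> (\<forall>x. g differentiable (at x))"
  by (simp add: differentiable_upto_def)

lemma differentiable_upto_Suc:
  "differentiable_upto (Suc n) g \<longleftrightarrow>
     (\<forall>x. g differentiable (at x)) \<and> (\<forall>i\<le>2. differentiable_upto n (pd i g))"
proof safe
  fix i assume g: "differentiable_upto (Suc n) g" and "i \<le> (2::nat)"
  show "differentiable_upto n (pd i g)"
    unfolding differentiable_upto_def
  proof (intro allI impI)
    fix "is" :: "nat list" and x assume "length is \<le> n" "set is \<subseteq> {0,1,2}"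
    with \<open>i \<le> 2\<close> have "length (is @ [i]) \<le> Suc n" "set (is @ [i]) \<subseteq> {0,1,2}" by auto
    with g have "foldr pd (is @ [i]) g differentiable (at x)"
      unfolding differentiable_upto_def by blast
    then show "foldr pd is (pd i g) differentiable (at x)" by simp
  qed
next
  fix x assume "differentiable_upto (Suc n) g"
  from this[unfolded differentiable_upto_def, rule_format, of "[]" x]
  show "g differentiable (at x)" by simp
next
  assume g: "\<forall>x. g differentiable (at x)" and pd: "\<forall>i\<le>2. differentiable_upto n (pd i g)"
  show "differentiable_upto (Suc n) g"
    unfolding differentiable_upto_def
  proof (intro allI impI)
    fix "is" :: "nat list" and x assume len: "length is \<le> Suc n" and set: "set is \<subseteq> {0,1,2}"
    show "foldr pd is g differentiable (at x)"
    proof (cases "is" rule: rev_exhaust)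
      case Nil
      from g have "g differentiable (at x)" ..
      with Nil show ?thesis by simp
    next
      case (snoc js i)
      with len set have "length js \<le> n" "set js \<subseteq> {0,1,2}" "i \<le> 2" by auto
      with pd have "foldr pd js (pd i g) differentiable (at x)"
        unfolding differentiable_upto_def by blast
      then show ?thesis using snoc by simp
    qed
  qed
qed

lemma differentiable_upto_SucD: "differentiable_upto (Suc n) g \<Longrightarrow> differentiable_upto n g"
  unfolding differentiable_upto_def by simp

lemma differentiable_upto_add:
  "differentiable_upto n u \<Longrightarrow> differentiable_upto n v \<Longrightarrow> differentiable_upto n (\<lambda>x. u x + v x)"
proof (induction n arbitrary: u v)
  case 0
  then show ?case by (simp add: differentiable_upto_0)
next
  case (Suc n)
  from Suc.prems have u: "\<forall>x. u differentiable (at x)" "\<forall>i\<le>2. differentiable_upto n (pd i u)"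
    and v: "\<forall>x. v differentiable (at x)" "\<forall>i\<le>2. differentiable_upto n (pd i v)"
    by (simp_all add: differentiable_upto_Suc)
  have "pd i (\<lambda>x. u x + v x) = (\<lambda>x. pd i u x + pd i v x)" for i
    using u(1) v(1) by (simp add: pd_add fun_eq_iff)
  moreover have "differentiable_upto n (\<lambda>x. pd i u x + pd i v x)" if "i \<le> 2" for i
    using Suc.IH u(2) v(2) that by blast
  ultimately show ?case
    using u(1) v(1) by (auto simp: differentiable_upto_Suc)
qed

lemma differentiable_upto_affine_coeff_mult:
  "differentiable_upto n g \<Longrightarrow> differentiable_upto n (\<lambda>x. affine_coeff \<alpha> b1 b2 x * g x)"
proof (induction n arbitrary: g \<alpha> b1 b2)
  case 0
  then show ?case by (simp add: differentiable_upto_0 affine_coeff_differentiable)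
next
  case (Suc n)
  from Suc.prems have g: "\<forall>x. g differentiable (at x)" and pd: "\<forall>i\<le>2. differentiable_upto n (pd i g)"
    and "differentiable_upto n g"
    by (simp_all add: differentiable_upto_Suc differentiable_upto_SucD)
  have "differentiable_upto n (pd i (\<lambda>x. affine_coeff \<alpha> b1 b2 x * g x))" if "i \<le> 2" for i
  proof -
    have "differentiable_upto n (\<lambda>x. affine_coeff \<alpha> b1 b2 x * pd i g x)"
      using Suc.IH[of "pd i g"] pd that by simp
    moreover have "differentiable_upto n (\<lambda>x. affine_coeff (affine_coeff_slope b1 b2 i) 0 0 x * g x)"
      by (rule Suc.IH[OF \<open>differentiable_upto n g\<close>])
    ultimately have "differentiable_upto n (\<lambda>x. affine_coeff \<alpha> b1 b2 x * pd i g x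
        + affine_coeff (affine_coeff_slope b1 b2 i) 0 0 x * g x)"
      by (rule differentiable_upto_add)
    moreover have "pd i (\<lambda>x. affine_coeff \<alpha> b1 b2 x * g x) =
        (\<lambda>x. affine_coeff \<alpha> b1 b2 x * pd i g x + of_real (affine_coeff_slope b1 b2 i) * g x)"
      using g by (simp add: pd_affine_coeff_mult fun_eq_iff)
    ultimately show ?thesis by simp
  qed
  moreover have "(\<lambda>x. affine_coeff \<alpha> b1 b2 x * g x) differentiable (at x)" for x
    using differentiable_mult[OF affine_coeff_differentiable g[rule_format]] .
  ultimately show ?case
    by (simp add: differentiable_upto_Suc)
qed

lemma smooth3_differentiable: "smooth3 g \<Longrightarrow> g differentiable (at x)"
  using differentiable_upto_0 smooth3_iff_differentiable_upto by blast

lemma smooth3_pd: "smooth3 g \<Longrightarrow> i \<le> 2 \<Longrightarrow> smooth3 (pd i g)"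
  using differentiable_upto_Suc smooth3_iff_differentiable_upto by blast

lemma smooth3_add: "smooth3 u \<Longrightarrow> smooth3 v \<Longrightarrow> smooth3 (\<lambda>x. u x + v x)"
  unfolding smooth3_iff_differentiable_upto using differentiable_upto_add by blast

lemma smooth3_affine_coeff_mult: "smooth3 g \<Longrightarrow> smooth3 (\<lambda>x. affine_coeff \<alpha> b1 b2 x * g x)"
  unfolding smooth3_iff_differentiable_upto using differentiable_upto_affine_coeff_mult by blast

lemma smooth3_cmult: "smooth3 g \<Longrightarrow> smooth3 (\<lambda>x. c * g x)"
  using smooth3_affine_coeff_mult[of g c 0 0] by simp

lemma smooth3_zero: "smooth3 (\<lambda>x. 0)"
proof -
  have "foldr pd is (\<lambda>x. 0) = (\<lambda>x. 0)" for "is"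
    by (induction "is") (auto simp: pd_zero)
  then show ?thesis unfolding smooth3_def by simp
qed

lemma smooth3_sum:
  assumes "finite A" and "\<And>j. j \<in> A \<Longrightarrow> smooth3 (u j)"
  shows "smooth3 (\<lambda>x. \<Sum>j\<in>A. c j * u j x)"
  using assms
proof (induction A rule: finite_induct)
  case empty
  then show ?case by (simp add: smooth3_zero)
next
  case (insert j A)
  then show ?case by (simp add: smooth3_add smooth3_cmult)
qed

section \<open>The operators \<open>D1\<close>, \<open>D2\<close>, \<open>D3\<close>\<close>

definition smooth_linear :: "((R3 \<Rightarrow> complex) \<Rightarrow> (R3 \<Rightarrow> complex)) \<Rightarrow> bool" where
  "smooth_linear T \<longleftrightarrow> (\<forall>u. smooth3 u \<longrightarrow> smooth3 (T u)) \<and>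
     (\<forall>u v. smooth3 u \<longrightarrow> smooth3 v \<longrightarrow> T (\<lambda>x. u x + v x) = (\<lambda>x. T u x + T v x)) \<and>
     (\<forall>c u. smooth3 u \<longrightarrow> T (\<lambda>x. c * u x) = (\<lambda>x. c * T u x))"

lemma
  assumes "smooth_linear T"
  shows smooth_linear_smooth: "smooth3 u \<Longrightarrow> smooth3 (T u)"
    and smooth_linear_add: "smooth3 u \<Longrightarrow> smooth3 v \<Longrightarrow> T (\<lambda>x. u x + v x) = (\<lambda>x. T u x + T v x)"
    and smooth_linear_cmult: "smooth3 u \<Longrightarrow> T (\<lambda>x. c * u x) = (\<lambda>x. c * T u x)"
  using assms unfolding smooth_linear_def by blast+

lemma smooth_linear_pd: "i \<le> 2 \<Longrightarrow> smooth_linear (pd i)"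
  unfolding smooth_linear_def
proof (intro conjI allI impI)
  fix u v c assume i: "i \<le> 2" and u: "smooth3 u"
  show "smooth3 (pd i u)" using u i by (rule smooth3_pd)
  show "pd i (\<lambda>x. c * u x) = (\<lambda>x. c * pd i u x)"
    using pd_affine_coeff_mult[OF smooth3_differentiable[OF u], of i c 0 0]
    by (simp add: fun_eq_iff affine_coeff_slope_def)
  assume v: "smooth3 v"
  show "pd i (\<lambda>x. u x + v x) = (\<lambda>x. pd i u x + pd i v x)"
    by (simp add: fun_eq_iff pd_add smooth3_differentiable u v)
qed

lemma smooth_linear_affine_comb:
  assumes S: "smooth_linear S" and T: "smooth_linear T"
  shows "smooth_linear (\<lambda>u x. S u x + affine_coeff \<alpha> b1 b2 x * T u x)"
  unfolding smooth_linear_def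
proof (intro conjI allI impI)
  fix u v c assume u: "smooth3 u"
  show "smooth3 (\<lambda>x. S u x + affine_coeff \<alpha> b1 b2 x * T u x)"
    by (intro smooth3_add smooth3_affine_coeff_mult smooth_linear_smooth[OF S u] smooth_linear_smooth[OF T u])
  show "(\<lambda>x. S (\<lambda>x. c * u x) x + affine_coeff \<alpha> b1 b2 x * T (\<lambda>x. c * u x) x) =
      (\<lambda>x. c * (S u x + affine_coeff \<alpha> b1 b2 x * T u x))"
    by (simp add: smooth_linear_cmult[OF S u] smooth_linear_cmult[OF T u] algebra_simps)
  assume v: "smooth3 v"
  show "(\<lambda>x. S (\<lambda>x. u x + v x) x + affine_coeff \<alpha> b1 b2 x * T (\<lambda>x. u x + v x) x) =
      (\<lambda>x. (S u x + affine_coeff \<alpha> b1 b2 x * T u x) + (S v x + affine_coeff \<alpha> b1 b2 x * T v x))"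
    by (simp add: smooth_linear_add[OF S u v] smooth_linear_add[OF T u v] algebra_simps)
qed

lemma smooth_linear_comp: "smooth_linear S \<Longrightarrow> smooth_linear T \<Longrightarrow> smooth_linear (\<lambda>u. S (T u))"
  unfolding smooth_linear_def by (auto simp del: all_simps)

lemma smooth_linear_funpow: "smooth_linear T \<Longrightarrow> smooth_linear (T ^^ n)"
proof (induction n)
  case 0
  then show ?case by (simp add: smooth_linear_def id_def)
next
  case (Suc n)
  then show ?case using smooth_linear_comp[of T "T ^^ n"] by (simp add: o_def)
qed

lemma smooth_linear_sum:
  assumes T: "smooth_linear T" and "finite A" and "\<And>j. j \<in> A \<Longrightarrow> smooth3 (u j)"
  shows "T (\<lambda>x. \<Sum>j\<in>A. c j * u j x) = (\<lambda>x. \<Sum>j\<in>A. c j * T (u j) x)"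
  using assms(2,3)
proof (induction A rule: finite_induct)
  case empty
  then show ?case using smooth_linear_cmult[OF T smooth3_zero, of 0] by simp
next
  case (insert j A)
  then show ?case
    by (simp add: smooth_linear_add[OF T] smooth_linear_cmult[OF T] smooth3_cmult smooth3_sum)
qed

lemma D1_eq_pd: "D1 = (\<lambda>g x. pd 0 g x + affine_coeff 0 0 (1/2) x * pd 2 g x)"
  by (auto simp: fun_eq_iff D1_def affine_coeff_def)

lemma D2_eq_pd: "D2 = (\<lambda>g x. pd 1 g x + affine_coeff 0 (-1/2) 0 x * pd 2 g x)"
  by (auto simp: fun_eq_iff D2_def affine_coeff_def)

lemma smooth_linear_D1: "smooth_linear D1"
  unfolding D1_eq_pd by (intro smooth_linear_affine_comb smooth_linear_pd) auto

lemma smooth_linear_D2: "smooth_linear D2"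
  unfolding D2_eq_pd by (intro smooth_linear_affine_comb smooth_linear_pd) auto

lemma smooth_linear_D3: "smooth_linear D3"
  unfolding D3_def fun_eq_iff by (intro smooth_linear_pd) auto

lemmas smooth3_D2 = smooth_linear_smooth[OF smooth_linear_D2]
lemmas smooth3_D3 = smooth_linear_smooth[OF smooth_linear_D3]
lemmas smooth3_D1_pow = smooth_linear_smooth[OF smooth_linear_funpow[OF smooth_linear_D1]]
lemmas smooth3_D2_pow = smooth_linear_smooth[OF smooth_linear_funpow[OF smooth_linear_D2]]
lemmas smooth3_D3_pow = smooth_linear_smooth[OF smooth_linear_funpow[OF smooth_linear_D3]]

lemma pd_pd_commute: "smooth3 g \<Longrightarrow> i \<le> 2 \<Longrightarrow> j \<le> 2 \<Longrightarrow> pd j (pd i g) p = pd i (pd j g) p"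
  by (intro pd_commute smooth3_differentiable smooth3_pd allI)

lemma pd_affine_comb:
  assumes g: "smooth3 g" and "j \<le> 2" and "k \<le> 2"
  shows "pd i (\<lambda>x. pd j g x + affine_coeff \<alpha> b1 b2 x * pd k g x) p =
    pd i (pd j g) p + affine_coeff \<alpha> b1 b2 p * pd i (pd k g) p + of_real (affine_coeff_slope b1 b2 i) * pd k g p"
  using assms
  by (simp add: pd_add pd_affine_coeff_mult smooth3_differentiable smooth3_pd smooth3_affine_coeff_mult)

lemma D1_apply: "D1 g p = pd 0 g p + affine_coeff 0 0 (1/2) p * pd 2 g p"
  by (simp add: D1_eq_pd)

lemma D2_apply: "D2 g p = pd 1 g p + affine_coeff 0 (-1/2) 0 p * pd 2 g p"
  by (simp add: D2_eq_pd)

lemma pd_D1: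
  "smooth3 g \<Longrightarrow> pd i (D1 g) p =
    pd i (pd 0 g) p + affine_coeff 0 0 (1/2) p * pd i (pd 2 g) p + of_real (affine_coeff_slope 0 (1/2) i) * pd 2 g p"
  unfolding D1_eq_pd by (rule pd_affine_comb) auto

lemma pd_D2:
  "smooth3 g \<Longrightarrow> pd i (D2 g) p =
    pd i (pd 1 g) p + affine_coeff 0 (-1/2) 0 p * pd i (pd 2 g) p + of_real (affine_coeff_slope (-1/2) 0 i) * pd 2 g p"
  unfolding D2_eq_pd by (rule pd_affine_comb) auto

lemma D2_D1_commutator:
  assumes g: "smooth3 g"
  shows "D2 (D1 g) = (\<lambda>x. D1 (D2 g) x + D3 g x)"
proof
  fix p
  have "pd 1 (pd 0 g) p = pd 0 (pd 1 g) p" "pd 2 (pd 0 g) p = pd 0 (pd 2 g) p"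
    "pd 2 (pd 1 g) p = pd 1 (pd 2 g) p"
    using pd_pd_commute[OF g] by auto
  then show "D2 (D1 g) p = D1 (D2 g) p + D3 g p"
    unfolding D2_apply[of "D1 g"] D1_apply[of "D2 g"] pd_D1[OF g] pd_D2[OF g] D3_def
    by (simp add: affine_coeff_slope_def algebra_simps)
qed

lemma D3_D1_commute: "smooth3 g \<Longrightarrow> D3 (D1 g) = D1 (D3 g)"
  unfolding fun_eq_iff D3_def D1_apply pd_D1
  by (simp add: pd_pd_commute affine_coeff_slope_def)

lemma D3_D2_commute: "smooth3 g \<Longrightarrow> D3 (D2 g) = D2 (D3 g)"
  unfolding fun_eq_iff D3_def D2_apply pd_D2
  by (simp add: pd_pd_commute affine_coeff_slope_def)

section \<open>Normal ordering\<close>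

definition Dmono :: "nat \<Rightarrow> nat \<Rightarrow> nat \<Rightarrow> (R3 \<Rightarrow> complex) \<Rightarrow> (R3 \<Rightarrow> complex)" where
  "Dmono a b c h = (D1 ^^ a) ((D2 ^^ b) ((D3 ^^ c) h))"

lemma smooth3_Dmono: "smooth3 h \<Longrightarrow> smooth3 (Dmono a b c h)"
  unfolding Dmono_def by (intro smooth3_D1_pow smooth3_D2_pow smooth3_D3_pow)

lemma D3_D1_pow_commute: "smooth3 h \<Longrightarrow> D3 ((D1 ^^ a) h) = (D1 ^^ a) (D3 h)"
  by (induction a) (simp_all add: D3_D1_commute smooth3_D1_pow)

lemma D3_D2_pow_commute: "smooth3 h \<Longrightarrow> D3 ((D2 ^^ b) h) = (D2 ^^ b) (D3 h)"
  by (induction b) (simp_all add: D3_D2_commute smooth3_D2_pow)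

lemma D2_D1_pow:
  assumes h: "smooth3 h"
  shows "D2 ((D1 ^^ a) h) = (\<lambda>x. (D1 ^^ a) (D2 h) x + of_nat a * (D1 ^^ (a - 1)) (D3 h) x)"
proof (induction a)
  case 0
  then show ?case by simp
next
  case (Suc a)
  have "D2 ((D1 ^^ Suc a) h) = (\<lambda>x. D1 (D2 ((D1 ^^ a) h)) x + D3 ((D1 ^^ a) h) x)"
    using D2_D1_commutator[OF smooth3_D1_pow[OF h]] by simp
  also have "\<dots> = (\<lambda>x. D1 (\<lambda>x. (D1 ^^ a) (D2 h) x + of_nat a * (D1 ^^ (a - 1)) (D3 h) x) x
      + (D1 ^^ a) (D3 h) x)"
    using Suc.IH D3_D1_pow_commute[OF h] by simp
  also have "\<dots> = (\<lambda>x. (D1 ^^ Suc a) (D2 h) x + of_nat a * D1 ((D1 ^^ (a - 1)) (D3 h)) x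
      + (D1 ^^ a) (D3 h) x)"
    by (simp add: smooth_linear_add[OF smooth_linear_D1] smooth_linear_cmult[OF smooth_linear_D1]
        smooth3_cmult smooth3_D1_pow smooth3_D2 smooth3_D3 h)
  also have "\<dots> = (\<lambda>x. (D1 ^^ Suc a) (D2 h) x + of_nat (Suc a) * (D1 ^^ (Suc a - 1)) (D3 h) x)"
    by (cases a) (simp_all add: algebra_simps)
  finally show ?case .
qed

lemma D1_pow_Dmono: "(D1 ^^ n) (Dmono a b c h) = Dmono (n + a) b c h"
  by (simp add: Dmono_def funpow_add)

lemma D1_Dmono: "D1 (Dmono a b c h) = Dmono (Suc a) b c h"
  using D1_pow_Dmono[of 1] by simp

lemma D3_Dmono: "smooth3 h \<Longrightarrow> D3 (Dmono a b c h) = Dmono a b (Suc c) h"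
  unfolding Dmono_def by (simp add: D3_D1_pow_commute D3_D2_pow_commute smooth3_D2_pow smooth3_D3_pow)

lemma D2_Dmono:
  "smooth3 h \<Longrightarrow> D2 (Dmono a b c h) = (\<lambda>x. Dmono a (Suc b) c h x + of_nat a * Dmono (a - 1) b (Suc c) h x)"
  unfolding Dmono_def by (simp add: D2_D1_pow D3_D2_pow_commute smooth3_D2_pow smooth3_D3_pow)

lemma Suc_mult_choose_Suc: "Suc i * (a choose Suc i) = (a - i) * (a choose i)"
  using binomial_absorb_comp[of a i] binomial_absorption[of i a] by simp

lemma choose_mult_choose:
  assumes "m \<le> j"
  shows "(a choose m) * ((a - m) choose (j - m)) = (a choose j) * (j choose m)"
proof (cases "j \<le> a")
  case True
  then show ?thesis using choose_mult[OF assms True] by simp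
next
  case False
  then have "a < m \<or> a - m < j - m" using assms by linarith
  then show ?thesis using False by (auto simp: binomial_eq_0 not_le)
qed

lemma fact_choose_mult:
  assumes "j \<le> t"
  shows "fact j * (k choose j) * (fact (t - j) * ((k - j) choose (t - j))) = fact t * (k choose t)"
proof -
  have "fact j * (k choose j) * (fact (t - j) * ((k - j) choose (t - j))) =
      (fact j * fact (t - j)) * ((k choose j) * ((k - j) choose (t - j)))"
    by (simp only: ac_simps)
  also have "\<dots> = (fact j * fact (t - j) * (t choose j)) * (k choose t)"
    by (simp only: choose_mult_choose[OF assms] ac_simps)
  also have "\<dots> = fact t * (k choose t)"
    by (simp only: binomial_fact_lemma[OF assms])
  finally show ?thesis .
qed

text \<open>\<open>matchings p q c\<close> counts the matchings of size \<open>c\<close> in the complete bipartite graph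
  \<open>K\<^sub>p\<^sub>,\<^sub>q\<close>: normal ordering \<open>D2^q D1^p\<close> contracts pairs \<open>(D2, D1)\<close> into \<open>D3\<close>.\<close>

definition matchings :: "nat \<Rightarrow> nat \<Rightarrow> nat \<Rightarrow> nat" where
  "matchings p q c = fact c * (p choose c) * (q choose c)"

lemma matchings_0 [simp]: "matchings p q 0 = 1"
  by (simp add: matchings_def)

lemma matchings_eq_0: "p < c \<or> q < c \<Longrightarrow> matchings p q c = 0"
  by (auto simp: matchings_def)

lemma matchings_commute: "matchings p q c = matchings q p c"
  by (simp add: matchings_def)

lemma matchings_Suc_Suc:
  "matchings a (Suc n) (Suc i) = matchings a n (Suc i) + matchings a n i * (a - i)"
proof -
  have "matchings a (Suc n) (Suc i) = matchings a n (Suc i) + fact (Suc i) * (a choose Suc i) * (n choose i)"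
    by (simp add: matchings_def algebra_simps)
  also have "fact (Suc i) * (a choose Suc i) * (n choose i) = fact i * (Suc i * (a choose Suc i)) * (n choose i)"
    by (simp add: algebra_simps)
  also have "\<dots> = fact i * ((a - i) * (a choose i)) * (n choose i)"
    by (simp only: Suc_mult_choose_Suc)
  also have "\<dots> = matchings a n i * (a - i)"
    by (simp only: matchings_def ac_simps)
  finally show ?thesis .
qed

lemma D2_pow_Dmono:
  assumes h: "smooth3 h"
  shows "(D2 ^^ n) (Dmono a b c h) =
    (\<lambda>x. \<Sum>i\<le>n. of_nat (matchings a n i) * Dmono (a - i) (b + n - i) (c + i) h x)"
proof (induction n)
  case 0
  then show ?case by simp
next
  case (Suc n)
  define \<kappa> where "\<kappa> m i = (of_nat (matchings a m i) :: complex)" for m i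
  define F where "F i = Dmono (a - i) (b + Suc n - i) (c + i) h" for i
  have \<kappa>_Suc: "\<kappa> (Suc n) (Suc i) = \<kappa> n (Suc i) + \<kappa> n i * of_nat (a - i)" for i
    unfolding \<kappa>_def matchings_Suc_Suc by simp
  have "(D2 ^^ Suc n) (Dmono a b c h) = D2 (\<lambda>x. \<Sum>i\<le>n. \<kappa> n i * Dmono (a - i) (b + n - i) (c + i) h x)"
    using Suc.IH by (simp add: \<kappa>_def)
  also have "\<dots> = (\<lambda>x. \<Sum>i\<le>n. \<kappa> n i * D2 (Dmono (a - i) (b + n - i) (c + i) h) x)"
    by (rule smooth_linear_sum[OF smooth_linear_D2]) (auto intro: smooth3_Dmono h)
  also have "\<dots> = (\<lambda>x. \<Sum>i\<le>n. \<kappa> n i * F i x + \<kappa> n i * of_nat (a - i) * F (Suc i) x)"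
    by (intro ext sum.cong) (auto simp: D2_Dmono[OF h] F_def Suc_diff_le algebra_simps)
  also have "\<dots> = (\<lambda>x. \<Sum>i\<le>Suc n. \<kappa> (Suc n) i * F i x)"
  proof
    fix x
    have "(\<Sum>i\<le>n. \<kappa> n i * F i x) = (\<Sum>i\<le>Suc n. \<kappa> n i * F i x)"
      by (simp add: \<kappa>_def matchings_eq_0)
    also have "\<dots> = \<kappa> n 0 * F 0 x + (\<Sum>i\<le>n. \<kappa> n (Suc i) * F (Suc i) x)"
      by (rule sum.atMost_Suc_shift)
    finally have A: "(\<Sum>i\<le>n. \<kappa> n i * F i x) = \<kappa> n 0 * F 0 x + (\<Sum>i\<le>n. \<kappa> n (Suc i) * F (Suc i) x)" .
    have B: "(\<Sum>i\<le>Suc n. \<kappa> (Suc n) i * F i x) =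
        \<kappa> (Suc n) 0 * F 0 x + (\<Sum>i\<le>n. (\<kappa> n (Suc i) + \<kappa> n i * of_nat (a - i)) * F (Suc i) x)"
      by (simp only: sum.atMost_Suc_shift \<kappa>_Suc)
    show "(\<Sum>i\<le>n. \<kappa> n i * F i x + \<kappa> n i * of_nat (a - i) * F (Suc i) x) =
        (\<Sum>i\<le>Suc n. \<kappa> (Suc n) i * F i x)"
      unfolding sum.distrib A B by (simp add: distrib_right sum.distrib \<kappa>_def)
  qed
  finally show ?case by (simp add: \<kappa>_def F_def)
qed

lemma D2_pow_D1_pow:
  assumes "smooth3 h"
  shows "(D2 ^^ b) ((D1 ^^ a) h) = (\<lambda>x. \<Sum>j\<le>b. of_nat (matchings a b j) * Dmono (a - j) (b - j) j h x)"
  using D2_pow_Dmono[OF assms, of b a 0 0] by (simp add: Dmono_def)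

section \<open>Symmetrization\<close>

lemma Dv_simps [simp]: "Dv 0 = D1" "Dv (Suc 0) = D2" "Dv 2 = D3"
  by (simp_all add: Dv_def)

lemma word_op_Nil [simp]: "word_op [] h = h"
  by (simp add: word_op_def)

lemma word_op_Cons [simp]: "word_op (i # w) h = Dv i (word_op w h)"
  by (simp add: word_op_def)

lemma smooth_linear_Dv: "smooth_linear (Dv i)"
  unfolding Dv_def using smooth_linear_D1 smooth_linear_D2 smooth_linear_D3 by auto

lemma smooth3_word_op: "smooth3 h \<Longrightarrow> smooth3 (word_op w h)"
  by (induction w) (auto intro: smooth_linear_smooth[OF smooth_linear_Dv])

lemma words_eq_permutations_of_multiset:
  "words p q r = permutations_of_multiset (replicate_mset p 0 + replicate_mset q 1 + replicate_mset r 2)"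
proof -
  define M where "M = replicate_mset p 0 + replicate_mset q 1 + replicate_mset r (2::nat)"
  have "w \<in> words p q r \<longleftrightarrow> (\<forall>x. count (mset w) x = count M x)" for w
  proof
    assume w: "w \<in> words p q r"
    show "\<forall>x. count (mset w) x = count M x"
    proof
      fix x :: nat
      show "count (mset w) x = count M x"
        using w by (cases "x \<in> {0,1,2}") (auto simp: words_def M_def count_mset count_list_0_iff)
    qed
  next
    assume c: "\<forall>x. count (mset w) x = count M x"
    have "set w \<subseteq> {0,1,2}"
    proof
      fix x assume "x \<in> set w"
      then have "count (mset w) x > 0" by (rule count_mset_gt_0)
      then show "x \<in> {0,1,2}" using c by (auto simp: M_def split: if_splits)
    qed
    moreover have "length w = p + q + r"
      using arg_cong[OF multiset_eqI[OF c[rule_format]], of size] by (simp add: M_def)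
    ultimately show "w \<in> words p q r"
      using c by (simp add: words_def M_def count_mset)
  qed
  then show ?thesis
    unfolding permutations_of_multiset_def M_def[symmetric] by (auto simp: multiset_eq_iff)
qed

lemma finite_words: "finite (words p q r)"
  by (simp add: words_eq_permutations_of_multiset)

lemma card_words: "card (words p q r) * (fact p * fact q * fact r) = fact (p + q + r)"
proof -
  define M where "M = replicate_mset p 0 + replicate_mset q 1 + replicate_mset (r::nat) (2::nat)"
  have "(\<Prod>x\<in>set_mset M. fact (count M x)) = (\<Prod>x\<in>{0,1,2}. fact (count M x) :: nat)"
    by (rule prod.mono_neutral_left) (auto simp: M_def split: if_splits)
  also have "\<dots> = fact p * fact q * fact r"
    by (simp add: M_def)
  finally show ?thesis
    using card_permutations_of_multiset_aux[of M] by (simp add: M_def words_eq_permutations_of_multiset)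
qed

lemma words_Cons_iff:
  "x # w \<in> words p q r \<longleftrightarrow>
     (x = 0 \<and> p > 0 \<and> w \<in> words (p - 1) q r) \<or> (x = 1 \<and> q > 0 \<and> w \<in> words p (q - 1) r) \<or>
     (x = 2 \<and> r > 0 \<and> w \<in> words p q (r - 1))"
  by (cases "x = 0"; cases "x = 1"; cases "x = 2") (auto simp: words_def)

lemma words_0_0_0: "words 0 0 0 = {[]}"
  by (auto simp: words_def)

lemma words_decomp:
  assumes "p + q + r > 0"
  shows "words p q r = (#) 0 ` (if p > 0 then words (p - 1) q r else {}) \<union>
    (#) 1 ` (if q > 0 then words p (q - 1) r else {}) \<union> (#) 2 ` (if r > 0 then words p q (r - 1) else {})"
proof (rule set_eqI)
  fix w
  show "w \<in> words p q r \<longleftrightarrow> w \<in> (#) 0 ` (if p > 0 then words (p - 1) q r else {}) \<union>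
    (#) 1 ` (if q > 0 then words p (q - 1) r else {}) \<union> (#) 2 ` (if r > 0 then words p q (r - 1) else {})"
    using assms by (cases w) (auto simp: words_Cons_iff, auto simp: words_def)
qed

lemma sum_words:
  assumes "p + q + r > 0"
  shows "(\<Sum>w\<in>words p q r. F w) =
     (if p > 0 then (\<Sum>w\<in>words (p - 1) q r. F (0 # w)) else 0) +
     (if q > 0 then (\<Sum>w\<in>words p (q - 1) r. F (1 # w)) else 0) +
     (if r > 0 then (\<Sum>w\<in>words p q (r - 1). F (2 # w)) else 0)"
proof -
  define A B C where "A = (if p > 0 then words (p - 1) q r else {})"
    and "B = (if q > 0 then words p (q - 1) r else {})" and "C = (if r > 0 then words p q (r - 1) else {})"
  have fin: "finite A" "finite B" "finite C"
    by (simp_all add: A_def B_def C_def finite_words)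
  have "(\<Sum>w\<in>words p q r. F w) = (\<Sum>w\<in>(#) 0 ` A \<union> (#) 1 ` B \<union> (#) 2 ` C. F w)"
    using words_decomp[OF assms] by (simp add: A_def B_def C_def)
  also have "\<dots> = (\<Sum>w\<in>(#) 0 ` A. F w) + (\<Sum>w\<in>(#) 1 ` B. F w) + (\<Sum>w\<in>(#) 2 ` C. F w)"
    using fin by (subst sum.union_disjoint, auto)+
  also have "\<dots> = (\<Sum>w\<in>A. F (0 # w)) + (\<Sum>w\<in>B. F (1 # w)) + (\<Sum>w\<in>C. F (2 # w))"
    by (simp add: sum.reindex)
  finally show ?thesis by (simp add: A_def B_def C_def)
qed

definition word_sum :: "nat \<Rightarrow> nat \<Rightarrow> nat \<Rightarrow> (R3 \<Rightarrow> complex) \<Rightarrow> (R3 \<Rightarrow> complex)" where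
  "word_sum p q r h = (\<lambda>x. \<Sum>w\<in>words p q r. word_op w h x)"

lemma card_words_nonzero: "card (words p q r) \<noteq> 0"
  using card_words[of p q r] by (metis fact_nonzero mult_0)

lemma symm_eq_word_sum: "symm p q r h x = word_sum p q r h x / of_nat (card (words p q r))"
  by (simp add: symm_def word_sum_def)

lemma word_sum_eq_symm: "word_sum p q r h = (\<lambda>x. of_nat (card (words p q r)) * symm p q r h x)"
  by (simp add: fun_eq_iff symm_eq_word_sum card_words_nonzero)

lemma smooth3_symm:
  assumes "smooth3 h"
  shows "smooth3 (symm p q r h)"
proof -
  have "smooth3 (\<lambda>x. \<Sum>w\<in>words p q r. 1 / of_nat (card (words p q r)) * word_op w h x)"
    by (rule smooth3_sum[OF finite_words smooth3_word_op[OF assms]])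
  then show ?thesis by (simp add: symm_def sum_divide_distrib)
qed

lemma word_sum_rec:
  assumes h: "smooth3 h" and "p + q + r > 0"
  shows "word_sum p q r h x =
    (if p > 0 then D1 (word_sum (p - 1) q r h) x else 0) +
    (if q > 0 then D2 (word_sum p (q - 1) r h) x else 0) +
    (if r > 0 then D3 (word_sum p q (r - 1) h) x else 0)"
proof -
  have D_word_sum: "T (word_sum p' q' r' h) x = (\<Sum>w\<in>words p' q' r'. T (word_op w h) x)"
    if "smooth_linear T" for T p' q' r'
    using smooth_linear_sum[OF that finite_words smooth3_word_op[OF h], of "\<lambda>_. 1"]
    by (simp add: word_sum_def)
  show ?thesis
    unfolding word_sum_def[of p q r] sum_words[OF assms(2)]
    by (simp add: D_word_sum smooth_linear_D1 smooth_linear_D2 smooth_linear_D3)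
qed

lemma multinomial_Suc_ratio:
  fixes c c' B :: nat
  assumes "c * (fact a * B) = fact (a + n)" and "c' * (fact (Suc a) * B) = fact (Suc a + n)" and "B \<noteq> 0"
  shows "(Suc a + n) * c = Suc a * c'"
proof -
  have "(Suc a + n) * c * (fact a * B) = (Suc a + n) * fact (a + n)"
    using assms(1) by (simp only: mult.assoc)
  also have "\<dots> = c' * (fact (Suc a) * B)"
    using assms(2) by simp
  also have "\<dots> = Suc a * c' * (fact a * B)"
    by (simp only: fact_Suc of_nat_id ac_simps)
  finally show ?thesis using assms(3) by simp
qed

lemma card_words_pred:
  "p > 0 \<Longrightarrow> (p + q + r) * card (words (p - 1) q r) = p * card (words p q r)"
  "q > 0 \<Longrightarrow> (p + q + r) * card (words p (q - 1) r) = q * card (words p q r)"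
  "r > 0 \<Longrightarrow> (p + q + r) * card (words p q (r - 1)) = r * card (words p q r)"
  using multinomial_Suc_ratio[where a="p - 1" and n="q + r" and B="fact q * fact r"]
    multinomial_Suc_ratio[where a="q - 1" and n="p + r" and B="fact p * fact r"]
    multinomial_Suc_ratio[where a="r - 1" and n="p + q" and B="fact p * fact q"]
    card_words[of "p - 1" q r] card_words[of p q r] card_words[of p "q - 1" r] card_words[of p q "r - 1"]
  by (auto simp: ac_simps gr0_conv_Suc)

lemma symm_rec:
  assumes h: "smooth3 h" and pos: "p + q + r > 0"
  shows "of_nat (p + q + r) * symm p q r h x =
    of_nat p * D1 (symm (p - 1) q r h) x + of_nat q * D2 (symm p (q - 1) r h) x +
    of_nat r * D3 (symm p q (r - 1) h) x"
proof -
  define N where "N p q r = (of_nat (card (words p q r)) :: complex)" for p q r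
  have D_word_sum: "T (word_sum p' q' r' h) x = N p' q' r' * T (symm p' q' r' h) x"
    if "smooth_linear T" for T p' q' r'
    using smooth_linear_cmult[OF that smooth3_symm[OF h]] by (simp add: word_sum_eq_symm N_def)
  have ratio: "of_nat (p + q + r) * (if p > 0 then N (p - 1) q r else 0) = of_nat p * N p q r"
    "of_nat (p + q + r) * (if q > 0 then N p (q - 1) r else 0) = of_nat q * N p q r"
    "of_nat (p + q + r) * (if r > 0 then N p q (r - 1) else 0) = of_nat r * N p q r"
    using card_words_pred[where p=p and q=q and r=r] unfolding N_def by (auto simp del: of_nat_add simp flip: of_nat_mult)
  have "of_nat (p + q + r) * symm p q r h x = of_nat (p + q + r) * word_sum p q r h x / N p q r"
    by (simp add: symm_eq_word_sum N_def)
  also have "\<dots> = (of_nat (p + q + r) * (if p > 0 then N (p - 1) q r else 0) * D1 (symm (p - 1) q r h) x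
      + of_nat (p + q + r) * (if q > 0 then N p (q - 1) r else 0) * D2 (symm p (q - 1) r h) x
      + of_nat (p + q + r) * (if r > 0 then N p q (r - 1) else 0) * D3 (symm p q (r - 1) h) x) / N p q r"
    unfolding word_sum_rec[OF h pos]
    by (simp add: D_word_sum smooth_linear_D1 smooth_linear_D2 smooth_linear_D3 algebra_simps)
  also have "\<dots> = of_nat p * D1 (symm (p - 1) q r h) x + of_nat q * D2 (symm p (q - 1) r h) x +
      of_nat r * D3 (symm p q (r - 1) h) x"
    unfolding ratio using card_words_nonzero by (simp add: N_def field_simps)
  finally show ?thesis .
qed

lemma matchings_rec:
  assumes "c \<le> p"
  shows "(p + q) * matchings p q c = p * matchings (p - 1) q c + q * matchings p (q - 1) c +
    (if c > 0 then 2 * q * (Suc p - c) * matchings p (q - 1) (c - 1) else 0)"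
proof -
  define X where "X = matchings p q c"
  have "(p + q) * X = (p - c) * X + (q - c) * X + 2 * c * X"
  proof (cases "c \<le> q")
    case True
    with assms have "p + q = (p - c) + (q - c) + 2 * c" by simp
    then show ?thesis by (metis add_mult_distrib)
  qed (simp add: X_def matchings_eq_0)
  moreover have "p * matchings (p - 1) q c = (p - c) * X"
    unfolding X_def matchings_def using binomial_absorb_comp[of p c] by (metis mult.assoc mult.left_commute)
  moreover have "q * matchings p (q - 1) c = (q - c) * X"
    unfolding X_def matchings_def using binomial_absorb_comp[of q c] by (metis mult.assoc mult.left_commute)
  moreover have "(if c > 0 then 2 * q * (Suc p - c) * matchings p (q - 1) (c - 1) else 0) = 2 * c * X"
  proof (cases c)
    case (Suc k)
    have "2 * q * (Suc p - c) * matchings p (q - 1) (c - 1) =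
        2 * fact k * ((p - k) * (p choose k)) * (q * ((q - 1) choose k))"
      by (simp add: matchings_def Suc algebra_simps)
    also have "\<dots> = 2 * fact k * (Suc k * (p choose Suc k)) * (Suc k * (q choose Suc k))"
      by (simp only: Suc_mult_choose_Suc binomial_absorption[symmetric])
    also have "\<dots> = 2 * c * X"
      by (simp add: X_def matchings_def Suc algebra_simps)
    finally show ?thesis using Suc by simp
  qed simp
  ultimately show ?thesis by (simp add: X_def)
qed

definition sym_coeff :: "nat \<Rightarrow> nat \<Rightarrow> nat \<Rightarrow> complex" where
  "sym_coeff p q c = of_nat (matchings p q c) / 2 ^ c"

lemma sym_coeff_eq_0: "p < c \<or> q < c \<Longrightarrow> sym_coeff p q c = 0"
  by (simp add: sym_coeff_def matchings_eq_0)

lemma sym_coeff_rec: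
  assumes "c \<le> p"
  shows "of_nat (p + q + r) * sym_coeff p q c = of_nat p * sym_coeff (p - 1) q c +
    of_nat q * (sym_coeff p (q - 1) c + (if c > 0 then of_nat (Suc p - c) * sym_coeff p (q - 1) (c - 1) else 0)) +
    of_nat r * sym_coeff p q c"
proof -
  have "(of_nat (p + q) :: complex) * of_nat (matchings p q c) = of_nat p * of_nat (matchings (p - 1) q c) +
      of_nat q * of_nat (matchings p (q - 1) c) +
      (if c > 0 then 2 * of_nat q * of_nat (Suc p - c) * of_nat (matchings p (q - 1) (c - 1)) else 0)"
    using arg_cong[OF matchings_rec[OF assms, of q], of "of_nat :: nat \<Rightarrow> complex"]
    by (simp del: of_nat_add add: of_nat_mult) (simp add: of_nat_add)
  then show ?thesis
    by (cases c) (simp_all add: sym_coeff_def field_simps)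
qed

definition symm_nf :: "nat \<Rightarrow> nat \<Rightarrow> nat \<Rightarrow> (R3 \<Rightarrow> complex) \<Rightarrow> (R3 \<Rightarrow> complex)" where
  "symm_nf p q r h = (\<lambda>x. \<Sum>c\<le>p. sym_coeff p q c * Dmono (p - c) (q - c) (r + c) h x)"

lemma D1_symm_nf:
  assumes h: "smooth3 h"
  shows "of_nat p * D1 (symm_nf (p - 1) q r h) x =
    (\<Sum>c\<le>p. of_nat p * sym_coeff (p - 1) q c * Dmono (p - c) (q - c) (r + c) h x)"
proof (cases p)
  case (Suc p')
  have "D1 (symm_nf p' q r h) x = (\<Sum>c\<le>p'. sym_coeff p' q c * Dmono (Suc p' - c) (q - c) (r + c) h x)"
    unfolding symm_nf_def smooth_linear_sum[OF smooth_linear_D1 finite_atMost smooth3_Dmono[OF h]]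
    by (intro sum.cong) (simp_all add: D1_Dmono Suc_diff_le)
  also have "\<dots> = (\<Sum>c\<le>Suc p'. sym_coeff p' q c * Dmono (Suc p' - c) (q - c) (r + c) h x)"
    by (simp add: sym_coeff_eq_0)
  finally show ?thesis
    by (simp add: Suc sum_distrib_left mult.assoc sym_coeff_eq_0)
qed simp

lemma D3_symm_nf:
  assumes h: "smooth3 h"
  shows "of_nat r * D3 (symm_nf p q (r - 1) h) x =
    (\<Sum>c\<le>p. of_nat r * sym_coeff p q c * Dmono (p - c) (q - c) (r + c) h x)"
proof (cases r)
  case (Suc r')
  have "D3 (symm_nf p q r' h) x = (\<Sum>c\<le>p. sym_coeff p q c * Dmono (p - c) (q - c) (Suc r' + c) h x)"
    unfolding symm_nf_def smooth_linear_sum[OF smooth_linear_D3 finite_atMost smooth3_Dmono[OF h]]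
    by (simp add: D3_Dmono[OF h])
  then show ?thesis
    by (simp add: Suc sum_distrib_left mult.assoc)
qed simp

lemma D2_symm_nf:
  assumes h: "smooth3 h"
  shows "of_nat q * D2 (symm_nf p (q - 1) r h) x =
    (\<Sum>c\<le>p. of_nat q * (sym_coeff p (q - 1) c +
      (if c > 0 then of_nat (Suc p - c) * sym_coeff p (q - 1) (c - 1) else 0)) * Dmono (p - c) (q - c) (r + c) h x)"
proof (cases q)
  case (Suc q')
  define G where "G c = Dmono (p - c) (Suc q' - c) (r + c) h x" for c
  define \<gamma> where "\<gamma> c = (if c > 0 then of_nat (Suc p - c) * sym_coeff p q' (c - 1) else (0::complex))" for c
  have "D2 (symm_nf p q' r h) x = (\<Sum>c\<le>p. sym_coeff p q' c * G c + sym_coeff p q' c * of_nat (p - c) * G (Suc c))"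
  proof -
    have "sym_coeff p q' c * D2 (Dmono (p - c) (q' - c) (r + c) h) x =
        sym_coeff p q' c * G c + sym_coeff p q' c * of_nat (p - c) * G (Suc c)" for c
      by (cases "c \<le> q'") (simp_all add: D2_Dmono[OF h] G_def Suc_diff_le sym_coeff_eq_0 algebra_simps)
    then show ?thesis
      unfolding symm_nf_def smooth_linear_sum[OF smooth_linear_D2 finite_atMost smooth3_Dmono[OF h]]
      by simp
  qed
  also have "\<dots> = (\<Sum>c\<le>p. (sym_coeff p q' c + \<gamma> c) * G c)"
  proof -
    have "(\<Sum>c\<le>p. \<gamma> c * G c) = (\<Sum>c\<le>Suc p. \<gamma> c * G c)"
      by (simp add: \<gamma>_def)
    also have "\<dots> = (\<Sum>c\<le>p. sym_coeff p q' c * of_nat (p - c) * G (Suc c))"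
      by (simp only: sum.atMost_Suc_shift) (simp add: \<gamma>_def algebra_simps)
    finally show ?thesis
      by (simp add: distrib_right sum.distrib)
  qed
  finally show ?thesis
    unfolding Suc by (simp add: G_def \<gamma>_def sum_distrib_left mult.assoc cong: if_cong)
qed simp

theorem symm_normal_form:
  assumes h: "smooth3 h"
  shows "symm p q r h = symm_nf p q r h"
proof (induction "p + q + r" arbitrary: p q r)
  case 0
  then show ?case
    by (simp add: fun_eq_iff symm_def symm_nf_def sym_coeff_def Dmono_def words_0_0_0)
next
  case (Suc n)
  then have pos: "p + q + r > 0" by linarith
  have IH: "p' + q' + r' = n \<Longrightarrow> symm p' q' r' h = symm_nf p' q' r' h" for p' q' r'
    using Suc.hyps(1) by blast
  have IH': "p > 0 \<Longrightarrow> symm (p - 1) q r h = symm_nf (p - 1) q r h"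
    "q > 0 \<Longrightarrow> symm p (q - 1) r h = symm_nf p (q - 1) r h"
    "r > 0 \<Longrightarrow> symm p q (r - 1) h = symm_nf p q (r - 1) h"
    by (rule IH, use Suc.hyps(2) in arith)+
  have eq: "of_nat (p + q + r) * symm p q r h x = of_nat (p + q + r) * symm_nf p q r h x" for x
  proof -
    have "of_nat (p + q + r) * symm p q r h x =
      of_nat p * D1 (symm_nf (p - 1) q r h) x + of_nat q * D2 (symm_nf p (q - 1) r h) x +
      of_nat r * D3 (symm_nf p q (r - 1) h) x"
      unfolding symm_rec[OF h pos] using IH'
      by (cases "p = 0"; cases "q = 0"; cases "r = 0") simp_all
    also have "\<dots> = (\<Sum>c\<le>p. of_nat (p + q + r) * sym_coeff p q c * Dmono (p - c) (q - c) (r + c) h x)"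
      unfolding D1_symm_nf[OF h] D2_symm_nf[OF h] D3_symm_nf[OF h] sum.distrib[symmetric]
      by (intro sum.cong refl, subst sym_coeff_rec) (simp_all add: algebra_simps)
    finally show ?thesis
      by (simp add: symm_nf_def sum_distrib_left mult.assoc)
  qed
  have "(of_nat (p + q + r) :: complex) \<noteq> 0"
    by (simp only: of_nat_eq_0_iff) (use pos in linarith)
  then show ?case
    using mult_cancel_left[THEN iffD1, OF eq] by blast
qed

lemma sum_atMost_triangle:
  fixes f :: "nat \<Rightarrow> nat \<Rightarrow> 'a::comm_monoid_add"
  shows "(\<Sum>m\<le>a. \<Sum>c\<le>a - m. f m c) = (\<Sum>j\<le>a. \<Sum>m\<le>j. f m (j - m))"
proof -
  have "(\<Sum>m\<le>a. \<Sum>c\<le>a - m. f m c) = (\<Sum>(m, c)\<in>(SIGMA m:{..a}. {..a - m}). f m c)"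
    by (rule sum.Sigma) auto
  also have "(SIGMA m:{..a}. {..a - m}) = {(m, c). m + c \<le> a}"
    by auto
  finally show ?thesis
    by (simp only: sum.triangle_reindex_eq)
qed

lemma sum_symm_normal_form:
  assumes "smooth3 h"
  shows "(\<Sum>m\<le>a. w m * symm (a - m) (b - m) m h x) =
    (\<Sum>j\<le>a. (\<Sum>m\<le>j. w m * sym_coeff (a - m) (b - m) (j - m)) * Dmono (a - j) (b - j) j h x)"
proof -
  have "(\<Sum>m\<le>a. w m * symm (a - m) (b - m) m h x) =
      (\<Sum>m\<le>a. \<Sum>c\<le>a - m. w m * sym_coeff (a - m) (b - m) c * Dmono (a - m - c) (b - m - c) (m + c) h x)"
    by (simp add: symm_normal_form[OF assms] symm_nf_def sum_distrib_left mult.assoc)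
  also have "\<dots> = (\<Sum>j\<le>a. \<Sum>m\<le>j. w m * sym_coeff (a - m) (b - m) (j - m) * Dmono (a - j) (b - j) j h x)"
    by (simp add: sum_atMost_triangle)
  finally show ?thesis
    by (simp add: sum_distrib_right)
qed

section \<open>Normal forms of \<open>Dpm\<close> and \<open>Dc\<close>\<close>

lemma matchings_mult:
  assumes "m \<le> j"
  shows "matchings a b m * matchings (a - m) (b - m) (j - m) = matchings a b j * (j choose m)"
proof -
  have "matchings a b m * matchings (a - m) (b - m) (j - m) =
      (fact m * (a choose m) * (fact (j - m) * ((a - m) choose (j - m)))) * ((b choose m) * ((b - m) choose (j - m)))"
    by (simp add: matchings_def ac_simps)
  also have "\<dots> = matchings a b j * (j choose m)"
    unfolding fact_choose_mult[OF assms] choose_mult_choose[OF assms] by (simp add: matchings_def ac_simps)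
  finally show ?thesis .
qed

lemma Dpm_normal_form:
  assumes h: "smooth3 h"
  shows "Dpm \<sigma> a b h = (\<lambda>x. \<Sum>j\<le>a. of_nat (matchings a b j) * ((1 + \<sigma>) / 2) ^ j * Dmono (a - j) (b - j) j h x)"
proof
  fix x
  define w where "w m = \<sigma> ^ m / 2 ^ m * of_nat (matchings a b m)" for m
  have coeff: "(\<Sum>m\<le>j. w m * sym_coeff (a - m) (b - m) (j - m)) = of_nat (matchings a b j) * ((1 + \<sigma>) / 2) ^ j"
    for j
  proof -
    have "w m * sym_coeff (a - m) (b - m) (j - m) = of_nat (matchings a b j) / 2 ^ j * (of_nat (j choose m) * \<sigma> ^ m * 1 ^ (j - m))"
      if "m \<le> j" for m
      using arg_cong[OF matchings_mult[OF that, of a b], of "of_nat :: nat \<Rightarrow> complex"] that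
      by (simp add: w_def sym_coeff_def field_simps flip: power_add)
    then have "(\<Sum>m\<le>j. w m * sym_coeff (a - m) (b - m) (j - m)) =
        of_nat (matchings a b j) / 2 ^ j * (\<Sum>m\<le>j. of_nat (j choose m) * \<sigma> ^ m * 1 ^ (j - m))"
      by (simp add: sum_distrib_left)
    also have "\<dots> = of_nat (matchings a b j) * ((1 + \<sigma>) / 2) ^ j"
      by (simp only: binomial_ring[symmetric]) (simp add: power_divide add.commute)
    finally show ?thesis .
  qed
  have "Dpm \<sigma> a b h x = (\<Sum>m\<le>a. w m * symm (a - m) (b - m) m h x)"
    unfolding Dpm_def w_def matchings_def[symmetric]
    by (rule sum.mono_neutral_left) (auto simp: matchings_eq_0)
  then show "Dpm \<sigma> a b h x = (\<Sum>j\<le>a. of_nat (matchings a b j) * ((1 + \<sigma>) / 2) ^ j * Dmono (a - j) (b - j) j h x)"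
    by (simp add: sum_symm_normal_form[OF h] coeff)
qed

theorem Dplus_eq:
  assumes h: "smooth3 h"
  shows "Dplus a b h = (D2 ^^ b) ((D1 ^^ a) h)"
proof
  fix x
  have "Dplus a b h x = (\<Sum>j\<le>a. of_nat (matchings a b j) * Dmono (a - j) (b - j) j h x)"
    by (simp add: Dpm_normal_form[OF h])
  also have "\<dots> = (\<Sum>j\<le>b. of_nat (matchings a b j) * Dmono (a - j) (b - j) j h x)"
    by (rule sum.mono_neutral_cong) (auto simp: matchings_eq_0)
  finally show "Dplus a b h x = (D2 ^^ b) ((D1 ^^ a) h) x"
    by (simp add: D2_pow_D1_pow[OF h])
qed

lemma Dminus_eq_Dmono: "smooth3 h \<Longrightarrow> Dminus a b h = Dmono a b 0 h"
  by (simp add: fun_eq_iff Dpm_normal_form sum.atMost_shift)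

theorem Dminus_eq: "smooth3 h \<Longrightarrow> Dminus a b h = (D1 ^^ a) ((D2 ^^ b) h)"
  by (simp add: Dminus_eq_Dmono Dmono_def)

lemma falling_eq_gbinomial: "falling z i = fact i * (z gchoose i)"
  unfolding falling_def gbinomial_prod_rev by (simp add: lessThan_atLeast0)

lemma rising_eq_gbinomial: "rising w n = (-1) ^ n * fact n * ((- w) gchoose n)"
proof -
  have "rising w n = pochhammer w n"
    unfolding rising_def pochhammer_prod by (simp add: lessThan_atLeast0)
  then show ?thesis
    unfolding gbinomial_pochhammer by (simp add: field_simps)
qed

lemma Cay_gbinomial:
  "Cay m (2 * z - of_nat a) (of_nat a) =
    fact m * (\<Sum>i\<le>m. (z gchoose i) * ((-1) ^ (m - i) * ((of_nat a - z) gchoose (m - i))))"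
proof -
  have "of_nat (m choose i) * falling z i * rising (z - of_nat a) (m - i) =
      fact m * ((z gchoose i) * ((-1) ^ (m - i) * ((of_nat a - z) gchoose (m - i))))" if "i \<le> m" for i
  proof -
    have "(of_nat (m choose i) * fact i * fact (m - i) :: complex) = fact m"
      using binomial_fact_lemma[OF that]
      by (metis (mono_tags, lifting) of_nat_fact of_nat_mult mult.commute mult.left_commute)
    moreover have "of_nat (m choose i) * falling z i * rising (z - of_nat a) (m - i) =
        (of_nat (m choose i) * fact i * fact (m - i)) *
        ((z gchoose i) * ((-1) ^ (m - i) * ((of_nat a - z) gchoose (m - i))))"
      unfolding falling_eq_gbinomial rising_eq_gbinomial by (simp add: algebra_simps)
    ultimately show ?thesis by simp
  qed
  moreover have args: "(2 * z - of_nat a + of_nat a) / 2 = z" "(2 * z - of_nat a - of_nat a) / 2 = z - of_nat a"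
    by simp_all
  ultimately show ?thesis
    unfolding Cay_def args sum_distrib_left by (intro sum.cong) auto
qed

text \<open>Negating the upper index of the second binomial coefficient turns this sum into an
  instance of Chu--Vandermonde.\<close>

lemma gbinomial_alternating_convolution:
  fixes z :: complex
  assumes "i \<le> j" and "j \<le> a"
  shows "(\<Sum>n\<le>j - i. (-1) ^ n * ((of_nat a - z) gchoose n) * of_nat ((a - (i + n)) choose (j - (i + n)))) =
    (z - of_nat i) gchoose (j - i)"
proof -
  define K where "K = j - i"
  have summand: "(-1) ^ n * ((of_nat a - z) gchoose n) * of_nat ((a - (i + n)) choose (j - (i + n))) =
      (-1) ^ K * (((of_nat a - z) gchoose n) * ((of_nat j - of_nat a - 1) gchoose (K - n)))"
    if "n \<le> K" for n
  proof -
    have "(of_nat ((a - (i + n)) choose (K - n)) :: complex) =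
        (-1) ^ (K - n) * ((of_nat (K - n) - of_nat (a - (i + n)) - 1) gchoose (K - n))"
      unfolding binomial_gbinomial by (rule gbinomial_negated_upper)
    also have "of_nat (K - n) - of_nat (a - (i + n)) - 1 = (of_nat j - of_nat a - 1 :: complex)"
      using that assms by (simp add: K_def of_nat_diff)
    finally have binom: "(of_nat ((a - (i + n)) choose (j - (i + n))) :: complex) =
        (-1) ^ (K - n) * ((of_nat j - of_nat a - 1) gchoose (K - n))"
      by (simp add: K_def)
    have sign: "(-1 :: complex) ^ n * (-1) ^ (K - n) = (-1) ^ K"
      using that by (simp flip: power_add)
    show ?thesis
      unfolding binom sign[symmetric] by (simp only: ac_simps)
  qed
  have "(\<Sum>n\<le>K. (-1) ^ n * ((of_nat a - z) gchoose n) * of_nat ((a - (i + n)) choose (j - (i + n)))) =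
      (-1) ^ K * (\<Sum>n=0..K. ((of_nat a - z) gchoose n) * ((of_nat j - of_nat a - 1) gchoose (K - n)))"
    unfolding sum_distrib_left atMost_atLeast0 by (rule sum.cong[OF refl], rule summand) simp
  also have "\<dots> = (-1) ^ K * ((of_nat K - (z - of_nat i) - 1) gchoose K)"
    unfolding gbinomial_Vandermonde using assms by (simp add: K_def of_nat_diff algebra_simps)
  also have "\<dots> = (z - of_nat i) gchoose K"
    using gbinomial_negated_upper[of "z - of_nat i" K] by (simp flip: mult.assoc power_add)
  finally show ?thesis unfolding K_def .
qed

lemma Cay_gbinomial_sum:
  fixes z :: complex
  assumes "j \<le> a"
  shows "(\<Sum>m\<le>j. of_nat ((a - m) choose (j - m)) *
      (\<Sum>i\<le>m. (z gchoose i) * ((-1) ^ (m - i) * ((of_nat a - z) gchoose (m - i))))) = 2 ^ j * (z gchoose j)"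
proof -
  define g where
    "g i n = (z gchoose i) * ((-1) ^ n * ((of_nat a - z) gchoose n)) * of_nat ((a - (i + n)) choose (j - (i + n)))"
    for i n
  have "(\<Sum>m\<le>j. of_nat ((a - m) choose (j - m)) *
      (\<Sum>i\<le>m. (z gchoose i) * ((-1) ^ (m - i) * ((of_nat a - z) gchoose (m - i))))) =
      (\<Sum>m\<le>j. \<Sum>i\<le>m. g i (m - i))"
    by (intro sum.cong refl) (auto simp: g_def sum_distrib_left algebra_simps intro!: sum.cong)
  also have "\<dots> = (\<Sum>i\<le>j. \<Sum>n\<le>j - i. g i n)"
    by (rule sum_atMost_triangle[symmetric])
  also have "\<dots> = (\<Sum>i\<le>j. (z gchoose i) * ((z - of_nat i) gchoose (j - i)))"
    using gbinomial_alternating_convolution[OF _ assms]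
    by (intro sum.cong refl) (simp add: g_def mult.assoc flip: sum_distrib_left)
  also have "\<dots> = (\<Sum>i\<le>j. (z gchoose j) * of_nat (j choose i))"
    by (intro sum.cong refl) (simp add: gbinomial_trinomial_revision binomial_gbinomial)
  also have "\<dots> = 2 ^ j * (z gchoose j)"
    by (simp flip: sum_distrib_left of_nat_sum add: choose_row_sum mult.commute)
  finally show ?thesis .
qed

lemma Cay_sym_coeff_sum:
  assumes "j \<le> a"
  shows "(\<Sum>m\<le>j. 1 / 2 ^ m * of_nat (a choose m) * Cay m (2 * z - of_nat a) (of_nat a) *
      sym_coeff (a - m) (a - m) (j - m)) = of_nat (fact j * (a choose j)) * (z gchoose j)"
proof -
  define T where "T m = (\<Sum>i\<le>m. (z gchoose i) * ((-1) ^ (m - i) * ((of_nat a - z) gchoose (m - i))))" for m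
  have "1 / 2 ^ m * of_nat (a choose m) * Cay m (2 * z - of_nat a) (of_nat a) * sym_coeff (a - m) (a - m) (j - m) =
      of_nat (fact j * (a choose j)) / 2 ^ j * (of_nat ((a - m) choose (j - m)) * T m)" if "m \<le> j" for m
  proof -
    have "(of_nat (a choose m) * fact m * of_nat (matchings (a - m) (a - m) (j - m)) :: complex) =
        of_nat (fact j * (a choose j)) * of_nat ((a - m) choose (j - m))"
      using arg_cong[OF fact_choose_mult[OF that, of a], of "of_nat :: nat \<Rightarrow> complex"]
      by (simp add: matchings_def algebra_simps)
    moreover have "(2 :: complex) ^ m * 2 ^ (j - m) = 2 ^ j"
      using that by (simp flip: power_add)
    moreover have "1 / 2 ^ m * of_nat (a choose m) * Cay m (2 * z - of_nat a) (of_nat a) * sym_coeff (a - m) (a - m) (j - m) =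
        (of_nat (a choose m) * fact m * of_nat (matchings (a - m) (a - m) (j - m))) * T m / (2 ^ m * 2 ^ (j - m))"
      unfolding Cay_gbinomial T_def[symmetric] by (simp add: sym_coeff_def field_simps)
    ultimately show ?thesis
      by (simp add: field_simps)
  qed
  then have "(\<Sum>m\<le>j. 1 / 2 ^ m * of_nat (a choose m) * Cay m (2 * z - of_nat a) (of_nat a) *
      sym_coeff (a - m) (a - m) (j - m)) =
      of_nat (fact j * (a choose j)) / 2 ^ j * (\<Sum>m\<le>j. of_nat ((a - m) choose (j - m)) * T m)"
    by (simp add: sum_distrib_left)
  also have "\<dots> = of_nat (fact j * (a choose j)) * (z gchoose j)"
    unfolding T_def Cay_gbinomial_sum[OF assms] by simp
  finally show ?thesis .
qed

theorem Dc_normal_form: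
  assumes h: "smooth3 h"
  shows "Dc (2 * z - of_nat a) a h =
    (\<lambda>x. \<Sum>j\<le>a. of_nat (fact j * (a choose j)) * (z gchoose j) * Dmono (a - j) (a - j) j h x)"
proof
  fix x
  define w where "w m = 1 / 2 ^ m * of_nat (a choose m) * Cay m (2 * z - of_nat a) (of_nat a)" for m
  have "Dc (2 * z - of_nat a) a h x = (\<Sum>m\<le>a. w m * symm (a - m) (a - m) m h x)"
    by (simp add: Dc_def w_def)
  also have "\<dots> = (\<Sum>j\<le>a. (\<Sum>m\<le>j. w m * sym_coeff (a - m) (a - m) (j - m)) * Dmono (a - j) (a - j) j h x)"
    by (rule sum_symm_normal_form[OF h])
  also have "\<dots> = (\<Sum>j\<le>a. of_nat (fact j * (a choose j)) * (z gchoose j) * Dmono (a - j) (a - j) j h x)"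
    by (intro sum.cong refl) (simp only: w_def Cay_sym_coeff_sum atMost_iff)
  finally show "Dc (2 * z - of_nat a) a h x =
    (\<Sum>j\<le>a. of_nat (fact j * (a choose j)) * (z gchoose j) * Dmono (a - j) (a - j) j h x)" .
qed

section \<open>Factorizations\<close>

lemma D1_pow_sum_Dmono:
  assumes "smooth3 h" and "finite A"
  shows "(D1 ^^ n) (\<lambda>x. \<Sum>j\<in>A. c j * Dmono (a j) (b j) (d j) h x) =
    (\<lambda>x. \<Sum>j\<in>A. c j * Dmono (n + a j) (b j) (d j) h x)"
  by (simp add: smooth_linear_sum[OF smooth_linear_funpow[OF smooth_linear_D1] assms(2) smooth3_Dmono[OF assms(1)]]
      D1_pow_Dmono)

lemma of_nat_gbinomial_matchings:
  "of_nat (fact j * (l choose j)) * (of_nat k gchoose j) = (of_nat (matchings k l j) :: complex)"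
  by (simp add: matchings_def binomial_gbinomial[symmetric])

theorem Dc_D1_factorization:
  assumes f: "smooth3 f"
  shows "(D1 ^^ (k - l)) (Dc (of_int (2 * int k - int l)) l f) = (D1 ^^ (l - k)) ((D2 ^^ l) ((D1 ^^ k) f))"
proof
  fix x
  have s: "(of_int (2 * int k - int l) :: complex) = 2 * of_nat k - of_nat l" by simp
  have shift: "k - l + (l - j) = l - k + (k - j)" if "j \<le> k" "j \<le> l" for j
    using that by arith
  have "(D1 ^^ (k - l)) (Dc (of_int (2 * int k - int l)) l f) x =
      (\<Sum>j\<le>l. of_nat (matchings k l j) * Dmono (k - l + (l - j)) (l - j) j f x)"
    unfolding s Dc_normal_form[OF f] D1_pow_sum_Dmono[OF f finite_atMost] of_nat_gbinomial_matchings ..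
  also have "\<dots> = (\<Sum>j\<le>l. of_nat (matchings k l j) * Dmono (l - k + (k - j)) (l - j) j f x)"
  proof (intro sum.cong refl)
    fix j assume "j \<in> {..l}"
    then show "of_nat (matchings k l j) * Dmono (k - l + (l - j)) (l - j) j f x =
        of_nat (matchings k l j) * Dmono (l - k + (k - j)) (l - j) j f x"
      by (cases "j \<le> k") (simp_all only: shift atMost_iff matchings_eq_0 not_le simp_thms of_nat_0 mult_zero_left)
  qed
  also have "\<dots> = (D1 ^^ (l - k)) ((D2 ^^ l) ((D1 ^^ k) f)) x"
    unfolding D2_pow_D1_pow[OF f] D1_pow_sum_Dmono[OF f finite_atMost] ..
  finally show "(D1 ^^ (k - l)) (Dc (of_int (2 * int k - int l)) l f) x =
      (D1 ^^ (l - k)) ((D2 ^^ l) ((D1 ^^ k) f)) x" .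
qed

lemma D2_pow_Dc_normal_form:
  assumes f: "smooth3 f"
  shows "(D2 ^^ n) (Dc (2 * z - of_nat k) k f) = (\<lambda>x. \<Sum>t\<le>k.
    of_nat (fact t * (k choose t)) * ((z + of_nat n) gchoose t) * Dmono (k - t) (k + n - t) t f x)"
proof
  fix x
  define c where "c j = of_nat (fact j * (k choose j)) * (z gchoose j)" for j
  define F where "F j i = c j * of_nat (matchings (k - j) n i) * Dmono (k - j - i) (k - j + n - i) (j + i) f x"
    for j i
  have F_triangle: "F j (t - j) = of_nat (fact t * (k choose t)) * ((z gchoose j) * (of_nat n gchoose (t - j))) *
      Dmono (k - t) (k + n - t) t f x" if "j \<le> t" "t \<le> k" for j t
  proof -
    have "k - j - (t - j) = k - t" "k - j + n - (t - j) = k + n - t" "j + (t - j) = t"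
      using that by auto
    moreover have "(of_nat (fact j * (k choose j)) :: complex) * of_nat (matchings (k - j) n (t - j)) =
        of_nat (fact t * (k choose t)) * of_nat (n choose (t - j))"
      using arg_cong[OF fact_choose_mult[OF that(1), of k], of "of_nat :: nat \<Rightarrow> complex"]
      by (simp add: matchings_def algebra_simps)
    ultimately show ?thesis
      by (simp add: F_def c_def binomial_gbinomial algebra_simps)
  qed
  have "(D2 ^^ n) (Dc (2 * z - of_nat k) k f) x = (\<Sum>j\<le>k. c j * (D2 ^^ n) (Dmono (k - j) (k - j) j f) x)"
    unfolding Dc_normal_form[OF f] c_def[symmetric]
      smooth_linear_sum[OF smooth_linear_funpow[OF smooth_linear_D2] finite_atMost smooth3_Dmono[OF f]] ..
  also have "\<dots> = (\<Sum>j\<le>k. \<Sum>i\<le>n. F j i)"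
    by (simp add: D2_pow_Dmono[OF f] F_def sum_distrib_left mult.assoc)
  also have "\<dots> = (\<Sum>j\<le>k. \<Sum>i\<le>k - j. F j i)"
    by (intro sum.cong refl sum.mono_neutral_cong) (auto simp: F_def matchings_eq_0)
  also have "\<dots> = (\<Sum>t\<le>k. \<Sum>j\<le>t. F j (t - j))"
    by (rule sum_atMost_triangle)
  also have "\<dots> = (\<Sum>t\<le>k. of_nat (fact t * (k choose t)) *
      (\<Sum>j=0..t. (z gchoose j) * (of_nat n gchoose (t - j))) * Dmono (k - t) (k + n - t) t f x)"
    by (intro sum.cong refl) (simp add: F_triangle sum_distrib_left sum_distrib_right atMost_atLeast0)
  finally show "(D2 ^^ n) (Dc (2 * z - of_nat k) k f) x = (\<Sum>t\<le>k.
      of_nat (fact t * (k choose t)) * ((z + of_nat n) gchoose t) * Dmono (k - t) (k + n - t) t f x)"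
    by (simp only: gbinomial_Vandermonde)
qed

text \<open>Here the parameter \<open>z = k - l\<close> of \<open>Dc\<close> may be negative, and \<open>z + (l - k) = k - l\<close> holds
  with truncated subtraction on the right.\<close>

theorem Dc_D2_factorization:
  assumes f: "smooth3 f"
  shows "(D2 ^^ (l - k)) (Dc (of_int (int k - 2 * int l)) k f) = (D2 ^^ (k - l)) ((D1 ^^ k) ((D2 ^^ l) f))"
proof
  fix x
  define z :: complex where "z = of_int (int k - int l)"
  have s: "(of_int (int k - 2 * int l) :: complex) = 2 * z - of_nat k"
    by (simp add: z_def)
  have zn: "z + of_nat (l - k) = of_nat (k - l)"
    by (cases "k \<le> l") (simp_all add: z_def of_nat_diff)
  have kl: "k + (l - k) = l + (k - l)"
    by arith
  have "(D2 ^^ (l - k)) (Dc (of_int (int k - 2 * int l)) k f) x =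
      (\<Sum>t\<le>k. of_nat (matchings k (k - l) t) * Dmono (k - t) (l + (k - l) - t) t f x)"
    unfolding s D2_pow_Dc_normal_form[OF f] zn of_nat_gbinomial_matchings matchings_commute[of "k - l"] kl ..
  also have "\<dots> = (\<Sum>t\<le>k - l. of_nat (matchings k (k - l) t) * Dmono (k - t) (l + (k - l) - t) t f x)"
    by (intro sum.mono_neutral_cong) (auto simp: matchings_eq_0)
  also have "\<dots> = (D2 ^^ (k - l)) ((D1 ^^ k) ((D2 ^^ l) f)) x"
    using D2_pow_Dmono[OF f, of "k - l" k l 0] by (simp add: Dmono_def)
  finally show "(D2 ^^ (l - k)) (Dc (of_int (int k - 2 * int l)) k f) x =
      (D2 ^^ (k - l)) ((D1 ^^ k) ((D2 ^^ l) f)) x" .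
qed

theorem theorem8p8:
  fixes k l :: nat and f :: "R3 \<Rightarrow> complex"
  assumes "1 \<le> k" and "1 \<le> l" and "smooth3 f"
  shows
   "(k < l \<longrightarrow>
       Dplus k l f = (D2 ^^ l) ((D1 ^^ k) f) \<and>
       Dminus (l - k) l f = (D1 ^^ (l - k)) ((D2 ^^ l) f) \<and>
       Dc (of_int (2 * int k - int l)) l f = (D1 ^^ (l - k)) (Dplus k l f) \<and>
       (D1 ^^ (l - k)) (Dplus k l f) = Dminus (l - k) l ((D1 ^^ k) f) \<and>
       Dminus (l - k) l ((D1 ^^ k) f) = (D1 ^^ (l - k)) ((D2 ^^ l) ((D1 ^^ k) f)))
  \<and> (k > l \<longrightarrow>
       (D1 ^^ (k - l)) (Dc (of_int (2 * int k - int l)) l f) = Dplus k l f \<and>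
       Dplus k l f = (D2 ^^ l) ((D1 ^^ k) f))
  \<and> (k > l \<longrightarrow>
       Dplus k (k - l) f = (D2 ^^ (k - l)) ((D1 ^^ k) f) \<and>
       Dminus k l f = (D1 ^^ k) ((D2 ^^ l) f) \<and>
       Dc (of_int (int k - 2 * int l)) k f = Dplus k (k - l) ((D2 ^^ l) f) \<and>
       Dplus k (k - l) ((D2 ^^ l) f) = (D2 ^^ (k - l)) (Dminus k l f) \<and>
       (D2 ^^ (k - l)) (Dminus k l f) = (D2 ^^ (k - l)) ((D1 ^^ k) ((D2 ^^ l) f)))
  \<and> (k < l \<longrightarrow>
       (D2 ^^ (l - k)) (Dc (of_int (int k - 2 * int l)) k f) = Dminus k l f \<and>
       Dminus k l f = (D1 ^^ k) ((D2 ^^ l) f))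
  \<and> (Dc (of_nat k) k f = Dplus k k f \<and> Dplus k k f = (D2 ^^ k) ((D1 ^^ k) f))
  \<and> (Dc (- of_nat k) k f = Dminus k k f \<and> Dminus k k f = (D1 ^^ k) ((D2 ^^ k) f))"
proof -
  have f: "smooth3 f" by fact
  have Dpm_words: "Dplus a b g = (D2 ^^ b) ((D1 ^^ a) g)" "Dminus a b g = (D1 ^^ a) ((D2 ^^ b) g)"
    if "g \<in> {f, (D1 ^^ k) f, (D2 ^^ l) f}" for a b g
    using that f by (auto simp: Dplus_eq Dminus_eq smooth3_D1_pow smooth3_D2_pow)
  note c1 = Dc_D1_factorization[OF f] and c2 = Dc_D2_factorization[OF f]
  show ?thesis
    using c1[where k=k and l=l] c2[where k=k and l=l] c1[where k=k and l=k] c2[where k=k and l=k]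
    by (cases k l rule: linorder_cases) (simp_all add: Dpm_words)
qed

end
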